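(* Let $\kappa$ be an uncountable cardinal. The following are equivalent: (i) there is a finitely additive regular probability measure on $\kappa$ (defined on all subsets of $\kappa$) which vanishes on singletons; (ii) there is a regular singular state on $l^\infty(\kappa)$; (iii) there is a regular singular state on $B(l^2(\kappa))$.
   Context: A finitely additive measure is regular if the union of any countable family of null sets is null. A state $\phi$ on a von Neumann algebra is regular if whenever $\{q_n\}$ is a countable set of projections with $\phi(q_n)=0$ for all $n$, then $\phi(\bigvee q_n)=0$. A state on $l^\infty(\kappa)$ is singular if it vanishes on finitely supported functions; a state on $B(l^2(\kappa))$ is singular if it vanishes on the compact operators. *)

theory Defs
  imports "HOL-Analysis.Analysis"
begin

definition cnonneg :: "complex \<Rightarrow> bool" where
  "cnonneg z \<longleftrightarrow> Im z = 0 \<and> Re z \<ge> 0"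

definition fa_prob_measure :: "('a set \<Rightarrow> real) \<Rightarrow> bool" where
  "fa_prob_measure \<mu> \<longleftrightarrow>
     (\<forall>A. \<mu> A \<ge> 0) \<and> \<mu> UNIV = 1 \<and>
     (\<forall>A B. A \<inter> B = {} \<longrightarrow> \<mu> (A \<union> B) = \<mu> A + \<mu> B)"

text \<open>Regular: the union of any countable family of null sets is null.
  (Countable families are indexed by nat; finite families are covered by repetition.)\<close>
definition regular_measure :: "('a set \<Rightarrow> real) \<Rightarrow> bool" where
  "regular_measure \<mu> \<longleftrightarrow>
     (\<forall>A :: nat \<Rightarrow> 'a set. (\<forall>n. \<mu> (A n) = 0) \<longrightarrow> \<mu> (\<Union>n. A n) = 0)"

definition linf :: "('a \<Rightarrow> complex) set" where
  "linf = {f. bounded (range f)}"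

definition linf_state :: "(('a \<Rightarrow> complex) \<Rightarrow> complex) \<Rightarrow> bool" where
  "linf_state \<phi> \<longleftrightarrow>
     (\<forall>f\<in>linf. \<forall>g\<in>linf. \<forall>c. \<phi> (\<lambda>x. f x + c * g x) = \<phi> f + c * \<phi> g) \<and>
     (\<forall>f\<in>linf. (\<forall>x. cnonneg (f x)) \<longrightarrow> cnonneg (\<phi> f)) \<and>
     \<phi> (\<lambda>_. 1) = 1"

definition linf_proj :: "('a \<Rightarrow> complex) \<Rightarrow> bool" where
  "linf_proj p \<longleftrightarrow> p \<in> linf \<and> (\<forall>x. p x * p x = p x \<and> cnj (p x) = p x)"

text \<open>Projection order \<open>p \<le> q\<close> iff \<open>q p = p\<close>; \<open>q\<close> is the supremum of the family \<open>P\<close>.\<close>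
definition linf_proj_sup :: "(nat \<Rightarrow> 'a \<Rightarrow> complex) \<Rightarrow> ('a \<Rightarrow> complex) \<Rightarrow> bool" where
  "linf_proj_sup P q \<longleftrightarrow> linf_proj q \<and> (\<forall>n. (\<lambda>x. q x * P n x) = P n) \<and>
     (\<forall>r. linf_proj r \<and> (\<forall>n. (\<lambda>x. r x * P n x) = P n) \<longrightarrow> (\<lambda>x. r x * q x) = q)"

definition linf_regular :: "(('a \<Rightarrow> complex) \<Rightarrow> complex) \<Rightarrow> bool" where
  "linf_regular \<phi> \<longleftrightarrow>
     (\<forall>P q. (\<forall>n. linf_proj (P n) \<and> \<phi> (P n) = 0) \<and> linf_proj_sup P q \<longrightarrow> \<phi> q = 0)"

definition linf_singular :: "(('a \<Rightarrow> complex) \<Rightarrow> complex) \<Rightarrow> bool" where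
  "linf_singular \<phi> \<longleftrightarrow> (\<forall>f. finite {x. f x \<noteq> 0} \<longrightarrow> \<phi> f = 0)"

definition ell2 :: "('a \<Rightarrow> complex) set" where
  "ell2 = {f. (\<lambda>x. (norm (f x))\<^sup>2) summable_on UNIV}"

definition ell2_inner :: "('a \<Rightarrow> complex) \<Rightarrow> ('a \<Rightarrow> complex) \<Rightarrow> complex" where
  "ell2_inner f g = (\<Sum>\<^sub>\<infinity>x. cnj (f x) * g x)"

definition ell2_norm :: "('a \<Rightarrow> complex) \<Rightarrow> real" where
  "ell2_norm f = sqrt (\<Sum>\<^sub>\<infinity>x. (norm (f x))\<^sup>2)"

definition ell2_metric :: "('a \<Rightarrow> complex) metric" where
  "ell2_metric = metric (ell2, \<lambda>f g. ell2_norm (\<lambda>x. f x - g x))"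

text \<open>Bounded linear operators on l^2, represented as functions that are
  normalised to 0 outside of l^2 (so that operator equality is HOL equality).\<close>
definition bop :: "(('a \<Rightarrow> complex) \<Rightarrow> ('a \<Rightarrow> complex)) set" where
  "bop = {T. (\<forall>f\<in>ell2. T f \<in> ell2) \<and>
             (\<forall>f\<in>ell2. \<forall>g\<in>ell2. \<forall>c. T (\<lambda>x. f x + c * g x) = (\<lambda>x. T f x + c * T g x)) \<and>
             (\<exists>K. \<forall>f\<in>ell2. ell2_norm (T f) \<le> K * ell2_norm f) \<and>
             (\<forall>f. f \<notin> ell2 \<longrightarrow> T f = (\<lambda>_. 0))}"

definition bop_id :: "('a \<Rightarrow> complex) \<Rightarrow> ('a \<Rightarrow> complex)" where
  "bop_id f = (if f \<in> ell2 then f else (\<lambda>_. 0))"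

definition bop_add_scaled ::
  "(('a \<Rightarrow> complex) \<Rightarrow> ('a \<Rightarrow> complex)) \<Rightarrow> complex \<Rightarrow> (('a \<Rightarrow> complex) \<Rightarrow> ('a \<Rightarrow> complex))
     \<Rightarrow> (('a \<Rightarrow> complex) \<Rightarrow> ('a \<Rightarrow> complex))" where
  "bop_add_scaled S c T = (\<lambda>f x. S f x + c * T f x)"

definition bop_positive :: "(('a \<Rightarrow> complex) \<Rightarrow> ('a \<Rightarrow> complex)) \<Rightarrow> bool" where
  "bop_positive T \<longleftrightarrow> T \<in> bop \<and> (\<forall>f\<in>ell2. cnonneg (ell2_inner f (T f)))"

definition bop_state :: "((('a \<Rightarrow> complex) \<Rightarrow> ('a \<Rightarrow> complex)) \<Rightarrow> complex) \<Rightarrow> bool" where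
  "bop_state \<phi> \<longleftrightarrow>
     (\<forall>S\<in>bop. \<forall>T\<in>bop. \<forall>c. \<phi> (bop_add_scaled S c T) = \<phi> S + c * \<phi> T) \<and>
     (\<forall>T. bop_positive T \<longrightarrow> cnonneg (\<phi> T)) \<and>
     \<phi> bop_id = 1"

definition bop_proj :: "(('a \<Rightarrow> complex) \<Rightarrow> ('a \<Rightarrow> complex)) \<Rightarrow> bool" where
  "bop_proj P \<longleftrightarrow> P \<in> bop \<and> P \<circ> P = P \<and>
     (\<forall>f\<in>ell2. \<forall>g\<in>ell2. ell2_inner (P f) g = ell2_inner f (P g))"

definition bop_proj_sup ::
  "(nat \<Rightarrow> ('a \<Rightarrow> complex) \<Rightarrow> ('a \<Rightarrow> complex)) \<Rightarrow> (('a \<Rightarrow> complex) \<Rightarrow> ('a \<Rightarrow> complex)) \<Rightarrow> bool" where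
  "bop_proj_sup P Q \<longleftrightarrow> bop_proj Q \<and> (\<forall>n. Q \<circ> P n = P n) \<and>
     (\<forall>R. bop_proj R \<and> (\<forall>n. R \<circ> P n = P n) \<longrightarrow> R \<circ> Q = Q)"

definition bop_regular :: "((('a \<Rightarrow> complex) \<Rightarrow> ('a \<Rightarrow> complex)) \<Rightarrow> complex) \<Rightarrow> bool" where
  "bop_regular \<phi> \<longleftrightarrow>
     (\<forall>P Q. (\<forall>n. bop_proj (P n) \<and> \<phi> (P n) = 0) \<and> bop_proj_sup P Q \<longrightarrow> \<phi> Q = 0)"

definition bop_compact :: "(('a \<Rightarrow> complex) \<Rightarrow> ('a \<Rightarrow> complex)) \<Rightarrow> bool" where
  "bop_compact T \<longleftrightarrow> T \<in> bop \<and>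
     compactin (mtopology_of ell2_metric)
       ((mtopology_of ell2_metric) closure_of (T ` {f\<in>ell2. ell2_norm f \<le> 1}))"

definition bop_singular :: "((('a \<Rightarrow> complex) \<Rightarrow> ('a \<Rightarrow> complex)) \<Rightarrow> complex) \<Rightarrow> bool" where
  "bop_singular \<phi> \<longleftrightarrow> (\<forall>T. bop_compact T \<longrightarrow> \<phi> T = 0)"

end

theory Submission
  imports Defs
begin

text \<open>A finitely additive probability measure \<open>\<mu>\<close> on all subsets integrates bounded functions
  (as limits of integrals of finitely-valued grid roundings), giving a state on \<open>l\<^sup>\<infinity>\<close>; conversely
  a state restricted to indicator functions is a finitely additive measure. In both directions
  the projections of \<open>l\<^sup>\<infinity>\<close> are exactly the indicators, so regularity and singularity correspond.
  Between \<open>l\<^sup>\<infinity>\<close> and \<open>B(l\<^sup>2)\<close> one passes by compressing to the diagonal, \<open>T \<mapsto> (\<lambda>x. \<langle>e\<^sub>x, T e\<^sub>x\<rangle>)\<close>,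
  and back by multiplication operators. A compact operator has a diagonal tending to \<open>0\<close>, on
  which a singular state vanishes. For regularity of the compression: if \<open>\<phi>\<close> annihilates the
  diagonals \<open>x \<mapsto> \<parallel>P\<^sub>n e\<^sub>x\<parallel>\<^sup>2\<close>, regularity makes the set where one of them is nonzero \<open>\<phi>\<close>-null, and
  outside it the supremum of the \<open>P\<^sub>n\<close> also kills \<open>e\<^sub>x\<close>.\<close>

lemma bounded_range_real_iff: "bounded (range f) \<longleftrightarrow> (\<exists>B. \<forall>x. \<bar>f x :: real\<bar> \<le> B)"
  by (simp add: bounded_iff)

lemma linf_iff: "f \<in> linf \<longleftrightarrow> (\<exists>B. \<forall>x. norm (f x) \<le> B)"
  by (simp add: linf_def bounded_iff)

lemma linf_const: "(\<lambda>_. c) \<in> linf"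
  unfolding linf_iff by auto

lemma linf_indicator: "(indicator A :: 'a \<Rightarrow> complex) \<in> linf"
  unfolding linf_iff by (auto intro: exI[of _ 1] split: split_indicator)

lemma linf_of_real: "bounded (range g) \<Longrightarrow> (\<lambda>x. complex_of_real (g x)) \<in> linf"
  unfolding bounded_range_real_iff linf_iff by auto

lemma linf_le: "f \<in> linf \<Longrightarrow> (\<And>x. cmod (g x) \<le> cmod (f x)) \<Longrightarrow> g \<in> linf"
  unfolding linf_iff by (meson order_trans)

lemma linf_finite_support: "finite {x. f x \<noteq> 0} \<Longrightarrow> f \<in> linf"
proof -
  assume fin: "finite {x. f x \<noteq> 0}"
  have "cmod (f x) \<le> Max (insert 0 (cmod ` f ` {x. f x \<noteq> 0}))" for x
    using fin by (cases "f x = 0") (auto intro: Max_ge)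
  thus ?thesis by (auto simp: linf_iff)
qed

lemma bounded_range_Re: "f \<in> linf \<Longrightarrow> bounded (range (\<lambda>x. Re (f x)))"
  unfolding linf_iff bounded_range_real_iff by (meson abs_Re_le_cmod order_trans)

lemma bounded_range_Im: "f \<in> linf \<Longrightarrow> bounded (range (\<lambda>x. Im (f x)))"
  unfolding linf_iff bounded_range_real_iff by (meson abs_Im_le_cmod order_trans)

lemma bounded_range_add_scaled:
  fixes f g :: "'a \<Rightarrow> real"
  assumes "bounded (range f)" "bounded (range g)"
  shows "bounded (range (\<lambda>x. f x + c * g x))"
proof -
  obtain A B where A: "\<forall>x. \<bar>f x\<bar> \<le> A" and B: "\<forall>x. \<bar>g x\<bar> \<le> B"
    using assms by (auto simp: bounded_range_real_iff)
  have "\<bar>f x + c * g x\<bar> \<le> A + \<bar>c\<bar> * B" for x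
  proof -
    have "\<bar>f x + c * g x\<bar> \<le> \<bar>f x\<bar> + \<bar>c\<bar> * \<bar>g x\<bar>" by (metis abs_mult abs_triangle_ineq)
    also have "\<dots> \<le> A + \<bar>c\<bar> * B" using A B by (intro add_mono mult_left_mono) auto
    finally show ?thesis .
  qed
  thus ?thesis by (auto simp: bounded_range_real_iff)
qed

lemma cnonneg_iff: "cnonneg z \<longleftrightarrow> 0 \<le> z"
  by (auto simp: cnonneg_def less_eq_complex_def)

lemma cnonneg_infsum: "(\<And>x. cnonneg (h x)) \<Longrightarrow> cnonneg (infsum h A)"
  by (cases "h summable_on A") (simp_all add: cnonneg_iff infsum_nonneg_complex infsum_not_exists)

section \<open>The Hilbert space \<open>l\<^sup>2\<close>\<close>

definition ket :: "'a \<Rightarrow> 'a \<Rightarrow> complex" where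
  "ket x = (\<lambda>y. if y = x then 1 else 0)"

lemma ell2_zero [simp]: "(\<lambda>_. 0) \<in> ell2"
  by (simp add: ell2_def)

lemma ell2_add_scaled:
  assumes "f \<in> ell2" "g \<in> ell2"
  shows "(\<lambda>x. f x + c * g x) \<in> ell2"
proof -
  have s: "(\<lambda>x. 2 * (norm (f x))\<^sup>2 + 2 * (norm c)\<^sup>2 * (norm (g x))\<^sup>2) summable_on UNIV"
    using assms by (intro summable_on_add summable_on_cmult_right) (auto simp: ell2_def)
  have "(norm (f x + c * g x))\<^sup>2 \<le> 2 * (norm (f x))\<^sup>2 + 2 * (norm c)\<^sup>2 * (norm (g x))\<^sup>2" for x
  proof -
    have "norm (f x + c * g x) \<le> norm (f x) + norm c * norm (g x)"
      by (metis norm_mult norm_triangle_ineq)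
    hence "(norm (f x + c * g x))\<^sup>2 \<le> (norm (f x) + norm c * norm (g x))\<^sup>2"
      by (simp add: power_mono)
    also have "\<dots> \<le> 2 * (norm (f x))\<^sup>2 + 2 * (norm c)\<^sup>2 * (norm (g x))\<^sup>2"
      using sum_squares_bound[of "norm (f x)" "norm c * norm (g x)"]
      by (simp add: power2_sum power_mult_distrib)
    finally show ?thesis .
  qed
  then show ?thesis unfolding ell2_def
    by (auto intro!: summable_on_comparison_test[OF s])
qed

lemma ell2_norm_nonneg [simp]: "ell2_norm f \<ge> 0"
  by (simp add: ell2_norm_def infsum_nonneg)

lemma ell2_norm_power2: "(ell2_norm f)\<^sup>2 = (\<Sum>\<^sub>\<infinity>x. (norm (f x))\<^sup>2)"
  by (simp add: ell2_norm_def infsum_nonneg)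

lemma infsum_single_support:
  assumes "\<And>y. y \<noteq> x \<Longrightarrow> h y = 0"
  shows "infsum h UNIV = h x"
proof -
  have "infsum h UNIV = infsum h {x}" by (rule infsum_cong_neutral) (use assms in auto)
  thus ?thesis by simp
qed

lemma norm_le_ell2_norm:
  assumes "f \<in> ell2" shows "norm (f x) \<le> ell2_norm f"
proof -
  have "(norm (f x))\<^sup>2 \<le> (\<Sum>\<^sub>\<infinity>y. (norm (f y))\<^sup>2)"
    using finite_sum_le_infsum[of "\<lambda>y. (norm (f y))\<^sup>2" UNIV "{x}"] assms by (simp add: ell2_def)
  thus ?thesis unfolding ell2_norm_def by (simp add: real_le_rsqrt)
qed

lemma ell2_norm_eq_0_iff:
  assumes "f \<in> ell2" shows "ell2_norm f = 0 \<longleftrightarrow> f = (\<lambda>_. 0)"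
proof
  assume "ell2_norm f = 0"
  hence "(\<Sum>\<^sub>\<infinity>y. (norm (f y))\<^sup>2) = 0" using ell2_norm_power2[of f] by simp
  hence "(norm (f x))\<^sup>2 = 0" for x
    using nonneg_infsum_le_0D[of "\<lambda>y. (norm (f y))\<^sup>2" UNIV x] assms by (simp add: ell2_def)
  thus "f = (\<lambda>_. 0)" by auto
qed (simp add: ell2_norm_def)

lemma ell2_mult_bounded:
  assumes B: "\<And>x. norm (f x) \<le> B" and g: "g \<in> ell2"
  shows "(\<lambda>x. f x * g x) \<in> ell2" "ell2_norm (\<lambda>x. f x * g x) \<le> B * ell2_norm g"
proof -
  have B0: "B \<ge> 0" using B[of undefined] norm_ge_zero order_trans by blast
  have s: "(\<lambda>x. B\<^sup>2 * (norm (g x))\<^sup>2) summable_on UNIV"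
    using g by (intro summable_on_cmult_right) (auto simp: ell2_def)
  have le: "(norm (f x * g x))\<^sup>2 \<le> B\<^sup>2 * (norm (g x))\<^sup>2" for x
  proof -
    have "norm (f x * g x) \<le> B * norm (g x)"
      by (simp add: norm_mult mult_right_mono B)
    hence "(norm (f x * g x))\<^sup>2 \<le> (B * norm (g x))\<^sup>2" by (simp add: power_mono)
    thus ?thesis by (simp add: power_mult_distrib)
  qed
  show fg: "(\<lambda>x. f x * g x) \<in> ell2" unfolding ell2_def
    by (auto intro!: summable_on_comparison_test[OF s] le)
  have "(\<Sum>\<^sub>\<infinity>x. (norm (f x * g x))\<^sup>2) \<le> (\<Sum>\<^sub>\<infinity>x. B\<^sup>2 * (norm (g x))\<^sup>2)"
    using fg s le by (intro infsum_mono) (auto simp: ell2_def)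
  also have "\<dots> = B\<^sup>2 * (\<Sum>\<^sub>\<infinity>x. (norm (g x))\<^sup>2)"
    by (simp add: infsum_cmult_right')
  finally have "sqrt (\<Sum>\<^sub>\<infinity>x. (norm (f x * g x))\<^sup>2) \<le> sqrt (B\<^sup>2 * (\<Sum>\<^sub>\<infinity>x. (norm (g x))\<^sup>2))"
    using real_sqrt_le_mono by blast
  also have "\<dots> = B * ell2_norm g"
    by (simp add: ell2_norm_def real_sqrt_mult B0)
  finally show "ell2_norm (\<lambda>x. f x * g x) \<le> B * ell2_norm g" by (simp add: ell2_norm_def)
qed

lemma ell2_finite_support: "finite {x. f x \<noteq> 0} \<Longrightarrow> f \<in> ell2"
  unfolding ell2_def mem_Collect_eq by (rule finite_nonzero_values_imp_summable_on) auto

lemma ket_ell2 [simp]: "ket x \<in> ell2"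
  by (rule ell2_finite_support) (auto simp: ket_def)

lemma ell2_norm_ket [simp]: "ell2_norm (ket x) = 1"
  unfolding ell2_norm_def by (subst infsum_single_support[of x]) (auto simp: ket_def)

lemma ell2_inner_self:
  assumes "f \<in> ell2" shows "ell2_inner f f = complex_of_real ((ell2_norm f)\<^sup>2)"
proof -
  have "((\<lambda>x. complex_of_real ((norm (f x))\<^sup>2)) has_sum complex_of_real (\<Sum>\<^sub>\<infinity>x. (norm (f x))\<^sup>2)) UNIV"
    using assms by (intro has_sum_of_real has_sum_infsum) (simp add: ell2_def)
  moreover have "cnj (f x) * f x = complex_of_real ((norm (f x))\<^sup>2)" for x
    by (metis complex_norm_square mult.commute)
  ultimately show ?thesis unfolding ell2_inner_def ell2_norm_power2 by (simp add: infsumI)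
qed

lemma ell2_inner_ket_left: "ell2_inner (ket x) g = g x"
  unfolding ell2_inner_def by (subst infsum_single_support[of x]) (auto simp: ket_def)

lemma ell2_norm_triangle:
  assumes f: "f \<in> ell2" and g: "g \<in> ell2"
  shows "ell2_norm (\<lambda>x. f x + g x) \<le> ell2_norm f + ell2_norm g"
proof (cases "ell2_norm f = 0 \<or> ell2_norm g = 0")
  case True
  then show ?thesis using f g by (auto simp: ell2_norm_eq_0_iff)
next
  case False
  define a b where "a = ell2_norm f" and "b = ell2_norm g"
  have a: "a > 0" and b: "b > 0" using False by (auto simp: a_def b_def less_le)
  define t where "t = b / a"
  have t: "t > 0" using a b by (simp add: t_def)
  have fg: "(\<lambda>x. f x + g x) \<in> ell2" using ell2_add_scaled[OF f g, of 1] by simp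
  have sf: "(\<lambda>x. (1 + t) * (norm (f x))\<^sup>2) summable_on UNIV"
    using f unfolding ell2_def by (intro summable_on_cmult_right) simp
  have sg: "(\<lambda>x. (1 + 1 / t) * (norm (g x))\<^sup>2) summable_on UNIV"
    using g unfolding ell2_def by (intro summable_on_cmult_right) simp
  \<comment> \<open>pointwise \<open>2pq \<le> t p\<^sup>2 + q\<^sup>2/t\<close>, with \<open>t\<close> chosen to make the resulting bound \<open>(a + b)\<^sup>2\<close>\<close>
  have le: "(norm (f x + g x))\<^sup>2 \<le> (1 + t) * (norm (f x))\<^sup>2 + (1 + 1 / t) * (norm (g x))\<^sup>2" for x
  proof -
    have "(norm (f x + g x))\<^sup>2 \<le> (norm (f x) + norm (g x))\<^sup>2"
      by (simp add: norm_triangle_ineq power_mono)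
    also have "\<dots> = (norm (f x))\<^sup>2 + 2 * norm (f x) * norm (g x) + (norm (g x))\<^sup>2"
      by (simp add: power2_sum)
    also have "2 * norm (f x) * norm (g x) \<le> t * (norm (f x))\<^sup>2 + (norm (g x))\<^sup>2 / t"
      using sum_squares_bound[of "sqrt t * norm (f x)" "norm (g x) / sqrt t"] t
      by (simp add: power_divide power_mult_distrib)
    also have "(norm (f x))\<^sup>2 + (t * (norm (f x))\<^sup>2 + (norm (g x))\<^sup>2 / t) + (norm (g x))\<^sup>2
               = (1 + t) * (norm (f x))\<^sup>2 + (1 + 1 / t) * (norm (g x))\<^sup>2"
      by (simp add: algebra_simps)
    finally show ?thesis by simp
  qed
  have "(ell2_norm (\<lambda>x. f x + g x))\<^sup>2 \<le> (\<Sum>\<^sub>\<infinity>x. (1 + t) * (norm (f x))\<^sup>2 + (1 + 1 / t) * (norm (g x))\<^sup>2)"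
    unfolding ell2_norm_power2 using fg sf sg le
    by (intro infsum_mono summable_on_add) (auto simp: ell2_def)
  also have "\<dots> = (1 + t) * a\<^sup>2 + (1 + 1 / t) * b\<^sup>2"
    unfolding infsum_add[OF sf sg] infsum_cmult_right' a_def b_def ell2_norm_power2 ..
  also have "\<dots> = (a + b)\<^sup>2"
    using a b by (simp add: t_def power2_eq_square field_simps)
  finally show ?thesis
    using power2_le_imp_le[of _ "a + b"] a b by (simp add: a_def b_def)
qed

lemma ell2_diff: "f \<in> ell2 \<Longrightarrow> g \<in> ell2 \<Longrightarrow> (\<lambda>x. f x - g x) \<in> ell2"
  using ell2_add_scaled[of f g "-1"] by simp

lemma Metric_space_ell2: "Metric_space ell2 (\<lambda>f g. ell2_norm (\<lambda>x. f x - g x))"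
proof
  show "ell2_norm (\<lambda>x. f x - g x) = ell2_norm (\<lambda>x. g x - f x)" for f g :: "'a \<Rightarrow> complex"
    unfolding ell2_norm_def by (simp add: norm_minus_commute)
  show "ell2_norm (\<lambda>x. f x - g x) = 0 \<longleftrightarrow> f = g" if "f \<in> ell2" "g \<in> ell2" for f g :: "'a \<Rightarrow> complex"
    using that by (simp add: ell2_norm_eq_0_iff ell2_diff fun_eq_iff)
  show "ell2_norm (\<lambda>x. f x - h x) \<le> ell2_norm (\<lambda>x. f x - g x) + ell2_norm (\<lambda>x. g x - h x)"
    if "f \<in> ell2" "g \<in> ell2" "h \<in> ell2" for f g h :: "'a \<Rightarrow> complex"
    using ell2_norm_triangle[OF ell2_diff[of f g] ell2_diff[of g h]] that by simp
qed simp

interpretation ell2_space: Metric_space ell2 "\<lambda>f g. ell2_norm (\<lambda>x. f x - g x)"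
  by (rule Metric_space_ell2)

lemma mtopology_of_ell2_metric: "mtopology_of ell2_metric = ell2_space.mtopology"
  by (simp add: ell2_metric_def)

lemma finite_ell2_level_set:
  assumes f: "f \<in> ell2" and e: "e > 0"
  shows "finite {y. e \<le> norm (f y)}"
proof (rule ccontr)
  assume inf: "infinite {y. e \<le> norm (f y)}"
  define S where "S = (\<Sum>\<^sub>\<infinity>y. (norm (f y))\<^sup>2)"
  obtain n :: nat where n: "S / e\<^sup>2 < real n" using reals_Archimedean2 by blast
  obtain F where F: "finite F" "card F = n" "F \<subseteq> {y. e \<le> norm (f y)}"
    using infinite_arbitrarily_large[OF inf] by blast
  have "real n * e\<^sup>2 = (\<Sum>y\<in>F. e\<^sup>2)" using F(2) by simp
  also have "\<dots> \<le> (\<Sum>y\<in>F. (norm (f y))\<^sup>2)"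
    using F(3) e by (intro sum_mono power_mono) auto
  also have "\<dots> \<le> S"
    unfolding S_def using f F(1) by (intro finite_sum_le_infsum) (auto simp: ell2_def)
  finally show False using n e by (simp add: field_simps)
qed

lemma eventually_inj_notin_finite:
  fixes s :: "nat \<Rightarrow> 'b" assumes "inj s" "finite A"
  shows "eventually (\<lambda>n. s n \<notin> A) sequentially"
proof -
  obtain N where "\<forall>n\<in>s -` A. n < N"
    using assms finite_vimageI finite_nat_set_iff_bounded by blast
  thus ?thesis unfolding eventually_sequentially by (meson not_le vimageI)
qed

text \<open>The entries are close to those of the limit, which has only finitely many large entries.\<close>
lemma ell2_limit_values_small:
  assumes lim: "limitin ell2_space.mtopology v l sequentially" and \<sigma>: "inj \<sigma>" and e: "e > 0"
  shows "eventually (\<lambda>n. norm (v n (\<sigma> n)) < e) sequentially"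
proof -
  have l: "l \<in> ell2"
    and conv: "\<forall>d>0. \<exists>N. \<forall>n\<ge>N. v n \<in> ell2 \<and> ell2_norm (\<lambda>x. v n x - l x) < d"
    using lim unfolding ell2_space.limit_metric_sequentially by auto
  have close: "eventually (\<lambda>n. v n \<in> ell2 \<and> ell2_norm (\<lambda>x. v n x - l x) < e / 2) sequentially"
    using conv[rule_format, of "e / 2"] e unfolding eventually_sequentially by auto
  have "finite {y. e / 2 \<le> norm (l y)}" using finite_ell2_level_set[OF l, of "e / 2"] e by simp
  from eventually_inj_notin_finite[OF \<sigma> this]
  have far: "eventually (\<lambda>n. norm (l (\<sigma> n)) < e / 2) sequentially" by (simp add: not_le)
  show ?thesis
    using close far
  proof eventually_elim
    case (elim n)
    have "norm (v n (\<sigma> n)) \<le> norm (l (\<sigma> n)) + norm (v n (\<sigma> n) - l (\<sigma> n))"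
      by (metis add.commute diff_add_cancel norm_triangle_ineq)
    also have "norm (v n (\<sigma> n) - l (\<sigma> n)) \<le> ell2_norm (\<lambda>x. v n x - l x)"
      using elim l by (intro norm_le_ell2_norm ell2_diff) auto
    finally show ?case using elim by simp
  qed
qed

section \<open>Bounded operators and their diagonals\<close>

lemma bop_ell2: "T \<in> bop \<Longrightarrow> f \<in> ell2 \<Longrightarrow> T f \<in> ell2"
  by (simp add: bop_def)

lemma bop_zero: assumes "T \<in> bop" shows "T (\<lambda>_. 0) = (\<lambda>_. 0)"
proof -
  have "\<forall>f\<in>ell2. \<forall>g\<in>ell2. \<forall>c. T (\<lambda>x. f x + c * g x) = (\<lambda>x. T f x + c * T g x)"
    using assms by (simp add: bop_def)
  from this[rule_format, OF ell2_zero ell2_zero, of 1]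
  show ?thesis by (simp add: fun_eq_iff)
qed

definition bop_diag :: "(('a \<Rightarrow> complex) \<Rightarrow> ('a \<Rightarrow> complex)) \<Rightarrow> 'a \<Rightarrow> complex" where
  "bop_diag T = (\<lambda>x. T (ket x) x)"

lemma bop_diag_ell2_inner: "bop_diag T x = ell2_inner (ket x) (T (ket x))"
  by (simp add: bop_diag_def ell2_inner_ket_left)

lemma bop_diag_linf: assumes T: "T \<in> bop" shows "bop_diag T \<in> linf"
proof -
  obtain K where K: "\<forall>f\<in>ell2. ell2_norm (T f) \<le> K * ell2_norm f"
    using T by (auto simp: bop_def)
  have "norm (bop_diag T x) \<le> K" for x
    using norm_le_ell2_norm[OF bop_ell2[OF T ket_ell2], of x x] K[rule_format, OF ket_ell2, of x]
    by (simp add: bop_diag_def)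
  thus ?thesis by (auto simp: linf_iff)
qed

lemma bop_diag_add_scaled: "bop_diag (bop_add_scaled S c T) = (\<lambda>x. bop_diag S x + c * bop_diag T x)"
  by (simp add: bop_diag_def bop_add_scaled_def)

lemma bop_diag_id: "bop_diag bop_id = (\<lambda>_. 1)"
  by (simp add: bop_diag_def bop_id_def) (simp add: ket_def)

text \<open>Otherwise \<open>T e\<^sub>x\<close>, for infinitely many \<open>x\<close>, would have a convergent subsequence whose \<open>x\<close>-th entries stay large.\<close>
lemma bop_compact_diag_finite:
  assumes T: "bop_compact T" and e: "e > 0"
  shows "finite {x. e \<le> norm (bop_diag T x)}"
proof (rule ccontr)
  assume "infinite {x. e \<le> norm (bop_diag T x)}"
  then obtain \<sigma> :: "nat \<Rightarrow> 'a" where \<sigma>: "inj \<sigma>" "range \<sigma> \<subseteq> {x. e \<le> norm (bop_diag T x)}"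
    using infinite_countable_subset by blast
  have Tb: "T \<in> bop" using T by (simp add: bop_compact_def)
  define B where "B = T ` {f\<in>ell2. ell2_norm f \<le> 1}"
  have "B \<subseteq> topspace ell2_space.mtopology" using bop_ell2[OF Tb] by (auto simp: B_def)
  hence "B \<subseteq> ell2_space.mtopology closure_of B" by (rule closure_of_subset)
  hence "range (\<lambda>k. T (ket (\<sigma> k))) \<subseteq> ell2_space.mtopology closure_of B"
    by (auto simp: B_def)
  moreover have "compactin ell2_space.mtopology (ell2_space.mtopology closure_of B)"
    using T by (simp add: bop_compact_def B_def mtopology_of_ell2_metric)
  ultimately obtain l r where r: "strict_mono r"
    and lim: "limitin ell2_space.mtopology ((\<lambda>k. T (ket (\<sigma> k))) \<circ> r) l sequentially"
    unfolding ell2_space.compactin_sequentially by blast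
  have "inj (\<sigma> \<circ> r)" using \<sigma>(1) r by (simp add: inj_compose strict_mono_imp_inj_on)
  from ell2_limit_values_small[OF lim this e] obtain n
    where "norm (T (ket (\<sigma> (r n))) (\<sigma> (r n))) < e"
    by (auto simp: eventually_sequentially)
  moreover have "e \<le> norm (T (ket (\<sigma> (r n))) (\<sigma> (r n)))"
    using \<sigma>(2) by (auto simp: bop_diag_def)
  ultimately show False by simp
qed

lemma bop_proj_idem: "bop_proj P \<Longrightarrow> P (P f) = P f"
  by (simp add: bop_proj_def) (metis comp_apply)

lemma bop_proj_adjoint: "bop_proj P \<Longrightarrow> f \<in> ell2 \<Longrightarrow> g \<in> ell2 \<Longrightarrow> ell2_inner (P f) g = ell2_inner f (P g)"
  by (simp add: bop_proj_def)

lemma bop_proj_diag: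
  assumes P: "bop_proj P" shows "bop_diag P x = complex_of_real ((ell2_norm (P (ket x)))\<^sup>2)"
proof -
  have Pe: "P (ket x) \<in> ell2" using P by (simp add: bop_proj_def bop_ell2)
  have "bop_diag P x = ell2_inner (ket x) (P (P (ket x)))"
    by (simp add: bop_diag_ell2_inner bop_proj_idem[OF P])
  also have "\<dots> = ell2_inner (P (ket x)) (P (ket x))" by (simp add: bop_proj_adjoint[OF P ket_ell2 Pe])
  finally show ?thesis by (simp add: ell2_inner_self[OF Pe])
qed

lemma infsum_eq_imp_eq_if_le:
  fixes h k :: "'a \<Rightarrow> real"
  assumes sh: "h summable_on UNIV" and sk: "k summable_on UNIV" and k0: "\<And>x. 0 \<le> k x"
    and le: "\<And>x. k x \<le> h x" and eq: "infsum h UNIV = infsum k UNIV"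
  shows "h x = k x"
proof -
  have sd: "(\<lambda>x. h x - k x) summable_on UNIV"
    by (rule summable_on_comparison_test[OF sh]) (use k0 le in auto)
  have "infsum (\<lambda>x. k x + (h x - k x)) UNIV = infsum k UNIV + infsum (\<lambda>x. h x - k x) UNIV"
    by (rule infsum_add[OF sk sd])
  hence "infsum (\<lambda>x. h x - k x) UNIV \<le> 0" using eq by simp
  hence "h x - k x = 0" by (rule nonneg_infsum_le_0D[OF _ sd]) (use le in auto)
  thus ?thesis by simp
qed

text \<open>\<open>R u\<close> agrees with \<open>u\<close> on the support of \<open>u\<close>, and since \<open>\<parallel>R u\<parallel>\<^sup>2 = \<langle>u, R u\<rangle> = \<parallel>u\<parallel>\<^sup>2\<close> it can have no mass elsewhere.\<close>
lemma bop_proj_fixes_if_fixes_support: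
  assumes R: "bop_proj R" and u: "u \<in> ell2" and Rket: "\<And>x. u x \<noteq> 0 \<Longrightarrow> R (ket x) = ket x"
  shows "R u = u"
proof -
  have Ru: "R u \<in> ell2" using R u by (simp add: bop_proj_def bop_ell2)
  have on_support: "R u x = u x" if "u x \<noteq> 0" for x
  proof -
    have "R u x = ell2_inner (R (ket x)) u"
      by (simp add: ell2_inner_ket_left bop_proj_adjoint[OF R ket_ell2 u])
    thus ?thesis by (simp add: Rket[OF that] ell2_inner_ket_left)
  qed
  have "ell2_inner (R u) (R u) = ell2_inner u (R u)"
    by (simp add: bop_proj_adjoint[OF R u Ru] bop_proj_idem[OF R])
  also have "\<dots> = ell2_inner u u"
    unfolding ell2_inner_def
  proof (rule infsum_cong)
    show "cnj (u x) * R u x = cnj (u x) * u x" for x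
      by (cases "u x = 0") (simp_all add: on_support)
  qed
  finally have "(\<Sum>\<^sub>\<infinity>x. (norm (R u x))\<^sup>2) = (\<Sum>\<^sub>\<infinity>x. (norm (u x))\<^sup>2)"
    unfolding ell2_inner_self[OF u] ell2_inner_self[OF Ru] ell2_norm_power2 by simp
  moreover have "(norm (u x))\<^sup>2 \<le> (norm (R u x))\<^sup>2" for x
    by (cases "u x = 0") (simp_all add: on_support)
  ultimately have sq: "(norm (R u x))\<^sup>2 = (norm (u x))\<^sup>2" for x
    using Ru u
    by (intro infsum_eq_imp_eq_if_le[where h = "\<lambda>x. (norm (R u x))\<^sup>2" and k = "\<lambda>x. (norm (u x))\<^sup>2"])
       (auto simp: ell2_def)
  have "R u x = u x" for x
  proof (cases "u x = 0")
    case True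
    then have "(norm (R u x))\<^sup>2 = 0" using sq[of x] by simp
    then show ?thesis using True by simp
  qed (rule on_support)
  thus ?thesis by auto
qed

lemma linf_proj_cases: "linf_proj p \<Longrightarrow> p x = 0 \<or> p x = 1"
  unfolding linf_proj_def by (metis mult_cancel_right1 mult_eq_0_iff)

lemma linf_proj_indicator: "linf_proj (indicator A)"
  by (simp add: linf_proj_def linf_indicator split: split_indicator)

lemma linf_proj_sup_indicator: "linf_proj_sup (\<lambda>n. indicator (A n)) (indicator (\<Union>n. A n))"
  unfolding linf_proj_sup_def
proof (intro conjI allI impI)
  show "linf_proj (indicator (\<Union>n. A n))" by (rule linf_proj_indicator)
  show "(\<lambda>x. indicator (\<Union>n. A n) x * indicator (A n) x) = (indicator (A n) :: 'a \<Rightarrow> complex)" for n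
    by (auto simp: fun_eq_iff split: split_indicator)
  fix r :: "'a \<Rightarrow> complex" assume r: "linf_proj r \<and> (\<forall>n. (\<lambda>x. r x * indicator (A n) x) = indicator (A n))"
  show "(\<lambda>x. r x * indicator (\<Union>n. A n) x) = indicator (\<Union>n. A n)"
  proof
    fix x show "r x * indicator (\<Union>n. A n) x = indicator (\<Union>n. A n) x"
    proof (cases "x \<in> (\<Union>n. A n)")
      case True
      then obtain n where "x \<in> A n" by auto
      then show ?thesis using True r fun_cong[of "\<lambda>x. r x * indicator (A n) x" "indicator (A n)" x] by simp
    qed simp
  qed
qed

lemma linf_proj_sup_support:
  assumes P: "\<forall>n. linf_proj (P n)" and q: "linf_proj_sup P q" and qx: "q x \<noteq> 0"
  shows "\<exists>n. P n x = 1"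
proof -
  define r :: "'a \<Rightarrow> complex" where "r = indicator {y. \<exists>n. P n y = 1}"
  have "(\<lambda>x. r x * P n x) = P n" for n
    using linf_proj_cases[OF P[rule_format, of n]] by (force simp: r_def fun_eq_iff split: split_indicator)
  hence "(\<lambda>x. r x * q x) = q" using q linf_proj_indicator by (auto simp: linf_proj_sup_def r_def)
  hence "r x * q x = q x" by metis
  thus ?thesis using qx by (auto simp: r_def split: split_indicator_asm)
qed

definition mult_op :: "('a \<Rightarrow> complex) \<Rightarrow> ('a \<Rightarrow> complex) \<Rightarrow> ('a \<Rightarrow> complex)" where
  "mult_op f = (\<lambda>g. if g \<in> ell2 then (\<lambda>x. f x * g x) else (\<lambda>_. 0))"

lemma mult_op_ell2: "f \<in> linf \<Longrightarrow> g \<in> ell2 \<Longrightarrow> mult_op f g \<in> ell2"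
  using ell2_mult_bounded(1) by (auto simp: mult_op_def linf_iff)

lemma mult_op_bop: assumes "f \<in> linf" shows "mult_op f \<in> bop"
proof -
  obtain B where B: "\<And>x. norm (f x) \<le> B" using assms by (auto simp: linf_iff)
  have "\<forall>g\<in>ell2. ell2_norm (mult_op f g) \<le> B * ell2_norm g"
    using ell2_mult_bounded(2)[OF B] by (auto simp: mult_op_def)
  moreover have "\<forall>g\<in>ell2. \<forall>h\<in>ell2. \<forall>c. mult_op f (\<lambda>x. g x + c * h x) = (\<lambda>x. mult_op f g x + c * mult_op f h x)"
    by (auto simp: mult_op_def ell2_add_scaled algebra_simps)
  ultimately show ?thesis
    using mult_op_ell2[OF assms] unfolding bop_def by (auto simp: mult_op_def)
qed

lemma mult_op_add_scaled: "mult_op (\<lambda>x. f x + c * g x) = bop_add_scaled (mult_op f) c (mult_op g)"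
  by (auto simp: mult_op_def bop_add_scaled_def fun_eq_iff algebra_simps)

lemma mult_op_one: "mult_op (\<lambda>_. 1) = bop_id"
  by (auto simp: mult_op_def bop_id_def fun_eq_iff)

lemma bop_positive_mult_op:
  assumes "f \<in> linf" "\<And>x. cnonneg (f x)" shows "bop_positive (mult_op f)"
  unfolding bop_positive_def
proof (intro conjI ballI)
  show "mult_op f \<in> bop" by (rule mult_op_bop[OF assms(1)])
  fix g :: "'a \<Rightarrow> complex" assume g: "g \<in> ell2"
  have fg: "cnj (g x) * (f x * g x) = f x * complex_of_real ((norm (g x))\<^sup>2)" for x
    by (metis complex_norm_square mult.assoc mult.commute)
  have "ell2_inner g (mult_op f g) = (\<Sum>\<^sub>\<infinity>x. f x * complex_of_real ((norm (g x))\<^sup>2))"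
    unfolding ell2_inner_def mult_op_def by (simp only: g if_True fg)
  moreover have "cnonneg (f x * complex_of_real ((norm (g x))\<^sup>2))" for x
    using assms(2)[of x] by (simp add: cnonneg_def)
  ultimately show "cnonneg (ell2_inner g (mult_op f g))" by (simp add: cnonneg_infsum)
qed

lemma bop_proj_mult_op: assumes "linf_proj p" shows "bop_proj (mult_op p)"
  unfolding bop_proj_def
proof (intro conjI ballI allI)
  have p: "p \<in> linf" using assms by (simp add: linf_proj_def)
  show "mult_op p \<in> bop" by (rule mult_op_bop[OF p])
  have pp: "p x * p x = p x" "cnj (p x) = p x" for x using assms by (auto simp: linf_proj_def)
  show "mult_op p \<circ> mult_op p = mult_op p"
    using mult_op_ell2[OF p] pp by (auto simp: mult_op_def fun_eq_iff mult.assoc[symmetric])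
  show "ell2_inner (mult_op p f) g = ell2_inner f (mult_op p g)" if "f \<in> ell2" "g \<in> ell2" for f g
    using that pp by (simp add: mult_op_def ell2_inner_def algebra_simps)
qed


lemma bop_compact_mult_op_ket: "bop_compact (mult_op (ket x))"
proof -
  define line where "line = (\<lambda>c::complex. \<lambda>y. c * ket x y)"
  have line_ell2: "line c \<in> ell2" for c
    unfolding line_def by (rule ell2_finite_support) (auto simp: ket_def)
  have "ell2_norm (line c) = norm c" for c
    unfolding ell2_norm_def line_def by (subst infsum_single_support[of x]) (auto simp: ket_def)
  moreover have "(\<lambda>y. line c y - line d y) = line (c - d)" for c d
    by (simp add: line_def algebra_simps)
  ultimately have "Lipschitz_continuous_map euclidean_metric ell2_metric line"
    unfolding Lipschitz_continuous_map_def ell2_metric_def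
    by (intro conjI exI[of _ 1] ballI) (auto simp: line_ell2 dist_norm)
  from Lipschitz_continuous_imp_continuous_map[OF this]
  have "continuous_map euclidean ell2_space.mtopology line" by (simp add: mtopology_of_ell2_metric)
  hence K: "compactin ell2_space.mtopology (line ` cball 0 1)"
    by (rule image_compactin[rotated]) simp
  have "mult_op (ket x) ` {f\<in>ell2. ell2_norm f \<le> 1} \<subseteq> line ` cball 0 1"
  proof
    fix h assume "h \<in> mult_op (ket x) ` {f\<in>ell2. ell2_norm f \<le> 1}"
    then obtain f where f: "f \<in> ell2" "ell2_norm f \<le> 1" and h: "h = mult_op (ket x) f" by auto
    have "h = line (f x)" using f h by (auto simp: mult_op_def ket_def line_def fun_eq_iff)
    moreover have "f x \<in> cball 0 1" using norm_le_ell2_norm[OF f(1), of x] f(2) by simp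
    ultimately show "h \<in> line ` cball 0 1" by blast
  qed
  hence "ell2_space.mtopology closure_of (mult_op (ket x) ` {f\<in>ell2. ell2_norm f \<le> 1}) \<subseteq> line ` cball 0 1"
    by (rule closure_of_minimal[OF _ compactin_imp_closedin[OF ell2_space.Hausdorff_space_mtopology K]])
  hence "compactin ell2_space.mtopology
           (ell2_space.mtopology closure_of (mult_op (ket x) ` {f\<in>ell2. ell2_norm f \<le> 1}))"
    by (rule closed_compactin[OF K]) simp
  moreover have "ket x \<in> linf" unfolding linf_iff by (auto intro: exI[of _ 1] simp: ket_def)
  ultimately show ?thesis using mult_op_bop by (simp add: bop_compact_def mtopology_of_ell2_metric)
qed

text \<open>If every \<open>P\<^sub>n\<close> kills \<open>e\<^sub>y\<close>, every \<open>P\<^sub>n\<close> lies below the coordinate projection onto \<open>{y}\<^sup>\<bottom>\<close>,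
  hence so does their supremum.\<close>
lemma bop_proj_sup_ket_zero:
  assumes sup: "bop_proj_sup P Q" and P: "\<And>n. bop_proj (P n)" and y: "\<And>n. P n (ket y) = (\<lambda>_. 0)"
  shows "Q (ket y) y = 0"
proof -
  define R where "R = mult_op (indicator (- {y}))"
  have "R \<circ> P n = P n" for n
  proof
    fix g show "(R \<circ> P n) g = P n g"
    proof (cases "g \<in> ell2")
      case True
      have Pg: "P n g \<in> ell2" using P True by (simp add: bop_proj_def bop_ell2)
      have "P n g y = ell2_inner (P n (ket y)) g"
        by (simp add: ell2_inner_ket_left bop_proj_adjoint[OF P ket_ell2 True])
      hence "P n g y = 0" by (simp add: y ell2_inner_def)
      thus ?thesis using Pg by (auto simp: R_def mult_op_def fun_eq_iff split: split_indicator)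
    next
      case False
      hence "P n g = (\<lambda>_. 0)" using P by (simp add: bop_proj_def bop_def)
      thus ?thesis by (simp add: R_def mult_op_def)
    qed
  qed
  hence "R \<circ> Q = Q" using sup bop_proj_mult_op[OF linf_proj_indicator] unfolding bop_proj_sup_def R_def by blast
  hence "R (Q (ket y)) y = Q (ket y) y" by (metis comp_apply)
  moreover have "Q (ket y) \<in> ell2" using sup by (simp add: bop_proj_sup_def bop_proj_def bop_ell2)
  ultimately show ?thesis by (simp add: R_def mult_op_def)
qed

lemma bop_proj_fixes_mult_op_if_fixes_kets:
  assumes R: "bop_proj R" and q: "q \<in> linf" and Rket: "\<And>x. q x \<noteq> 0 \<Longrightarrow> R (ket x) = ket x"
  shows "R \<circ> mult_op q = mult_op q"
proof
  fix g show "(R \<circ> mult_op q) g = mult_op q g"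
  proof (cases "g \<in> ell2")
    case True
    have "mult_op q g \<in> ell2" using q True by (rule mult_op_ell2)
    moreover have "mult_op q g x \<noteq> 0 \<Longrightarrow> q x \<noteq> 0" for x by (simp add: mult_op_def True)
    ultimately have "R (mult_op q g) = mult_op q g"
      using R Rket by (blast intro: bop_proj_fixes_if_fixes_support)
    then show ?thesis by simp
  next
    case False
    have "R \<in> bop" using R by (simp add: bop_proj_def)
    thus ?thesis using False by (simp add: mult_op_def bop_zero)
  qed
qed

lemma bop_proj_sup_mult_op:
  assumes P: "\<forall>n. linf_proj (P n)" and sup: "linf_proj_sup P q"
  shows "bop_proj_sup (\<lambda>n. mult_op (P n)) (mult_op q)"
  unfolding bop_proj_sup_def
proof (intro conjI allI impI)
  have q: "linf_proj q" using sup by (simp add: linf_proj_sup_def)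
  then show "bop_proj (mult_op q)" by (rule bop_proj_mult_op)
  have qP: "q x * (P n x * g x) = P n x * g x" for n x g
    using sup fun_cong[of "\<lambda>x. q x * P n x" "P n" x] by (simp add: linf_proj_sup_def mult.assoc[symmetric])
  show "mult_op q \<circ> mult_op (P n) = mult_op (P n)" for n
  proof
    fix g
    have "P n \<in> linf" using P by (simp add: linf_proj_def)
    then have "g \<in> ell2 \<Longrightarrow> mult_op (P n) g \<in> ell2" by (rule mult_op_ell2)
    then show "(mult_op q \<circ> mult_op (P n)) g = mult_op (P n) g"
      by (simp add: mult_op_def qP)
  qed
  fix R assume R: "bop_proj R \<and> (\<forall>n. R \<circ> mult_op (P n) = mult_op (P n))"
  show "R \<circ> mult_op q = mult_op q"
  proof (rule bop_proj_fixes_mult_op_if_fixes_kets)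
    show "bop_proj R" using R by blast
    show "q \<in> linf" using q by (simp add: linf_proj_def)
    fix x assume "q x \<noteq> 0"
    then obtain n where n: "P n x = 1" using linf_proj_sup_support[OF P sup] by blast
    have "mult_op (P n) (ket x) = ket x"
      using ket_ell2[of x] by (auto simp: mult_op_def n) (auto simp: ket_def n)
    thus "R (ket x) = ket x" using R by (metis comp_apply)
  qed
qed

section \<open>Integration against a finitely additive probability\<close>

definition step_integral :: "('a set \<Rightarrow> real) \<Rightarrow> ('a \<Rightarrow> real) \<Rightarrow> real" where
  "step_integral \<mu> s = (\<Sum>v\<in>range s. v * \<mu> (s -` {v}))"

definition grid_round :: "nat \<Rightarrow> ('a \<Rightarrow> real) \<Rightarrow> 'a \<Rightarrow> real" where
  "grid_round n f = (\<lambda>x. of_int \<lfloor>f x * real (Suc n)\<rfloor> / real (Suc n))"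

definition fa_integral :: "('a set \<Rightarrow> real) \<Rightarrow> ('a \<Rightarrow> real) \<Rightarrow> real" where
  "fa_integral \<mu> f = lim (\<lambda>n. step_integral \<mu> (grid_round n f))"

definition fa_cintegral :: "('a set \<Rightarrow> real) \<Rightarrow> ('a \<Rightarrow> complex) \<Rightarrow> complex" where
  "fa_cintegral \<mu> f = Complex (fa_integral \<mu> (\<lambda>x. Re (f x))) (fa_integral \<mu> (\<lambda>x. Im (f x)))"

lemma finite_range_const: "finite (range (\<lambda>_. c))"
  by simp

lemma finite_range_add_scaled:
  "finite (range s) \<Longrightarrow> finite (range t) \<Longrightarrow> finite (range (\<lambda>x. s x + c * t x))"
proof -
  assume "finite (range s)" "finite (range t)"
  hence "finite ((\<lambda>(a, b). a + c * b) ` (range s \<times> range t))" by simp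
  moreover have "range (\<lambda>x. s x + c * t x) \<subseteq> (\<lambda>(a, b). a + c * b) ` (range s \<times> range t)" by auto
  ultimately show ?thesis by (rule finite_subset[rotated])
qed

lemma grid_round_close: "\<bar>f x - grid_round n f x\<bar> \<le> inverse (real (Suc n))"
proof -
  define N where "N = real (Suc n)"
  have N: "N > 0" by (simp add: N_def)
  have "0 \<le> f x * N - of_int \<lfloor>f x * N\<rfloor>" "f x * N - of_int \<lfloor>f x * N\<rfloor> \<le> 1" by linarith+
  hence "0 \<le> (f x * N - of_int \<lfloor>f x * N\<rfloor>) / N" "(f x * N - of_int \<lfloor>f x * N\<rfloor>) / N \<le> 1 / N"
    using N by (simp_all add: divide_right_mono)
  moreover have "(f x * N - of_int \<lfloor>f x * N\<rfloor>) / N = f x - grid_round n f x"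
    using N by (simp add: grid_round_def N_def field_simps)
  ultimately have "0 \<le> f x - grid_round n f x" "f x - grid_round n f x \<le> 1 / N" by simp_all
  thus ?thesis by (simp add: N_def inverse_eq_divide)
qed

lemma grid_round_nonneg: "f x \<ge> 0 \<Longrightarrow> grid_round n f x \<ge> 0"
  by (simp add: grid_round_def)

lemma finite_range_grid_round:
  assumes "bounded (range f)" shows "finite (range (grid_round n f))"
proof -
  obtain B where B: "\<And>x. \<bar>f x\<bar> \<le> B" using assms by (auto simp: bounded_range_real_iff)
  define N where "N = real (Suc n)"
  have "\<lfloor>f x * N\<rfloor> \<in> {\<lfloor>- B * N\<rfloor>..\<lfloor>B * N\<rfloor>}" for x
  proof -
    have "N > 0" by (simp add: N_def)
    hence "- B * N \<le> f x * N" "f x * N \<le> B * N"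
      using mult_right_mono[of "- B" "f x" N] mult_right_mono[of "f x" B N] B[of x]
      by (auto simp: abs_le_iff)
    thus ?thesis by (auto intro: floor_mono)
  qed
  hence "range (grid_round n f) \<subseteq> (\<lambda>k. of_int k / N) ` {\<lfloor>- B * N\<rfloor>..\<lfloor>B * N\<rfloor>}"
    by (auto simp: grid_round_def N_def)
  thus ?thesis by (rule finite_subset) simp
qed

lemma eq_0_if_abs_le_inverse_Suc:
  assumes "\<And>n. \<bar>x::real\<bar> \<le> C * inverse (real (Suc n))"
  shows "x = 0"
proof -
  have "(\<lambda>n. C * inverse (real (Suc n))) \<longlonglongrightarrow> C * 0"
    by (intro tendsto_mult tendsto_const LIMSEQ_inverse_real_of_nat)
  hence "\<bar>x\<bar> \<le> C * 0" by (rule LIMSEQ_le_const) (use assms in auto)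
  thus ?thesis by simp
qed

locale fa_probability =
  fixes \<mu> :: "'a set \<Rightarrow> real"
  assumes fa: "fa_prob_measure \<mu>"
begin

lemma measure_nonneg: "\<mu> A \<ge> 0" using fa by (simp add: fa_prob_measure_def)
lemma measure_UNIV: "\<mu> UNIV = 1" using fa by (simp add: fa_prob_measure_def)
lemma measure_Un: "A \<inter> B = {} \<Longrightarrow> \<mu> (A \<union> B) = \<mu> A + \<mu> B" using fa by (simp add: fa_prob_measure_def)
lemma measure_empty: "\<mu> {} = 0"
proof -
  have "\<mu> ({} \<union> {}) = \<mu> {} + \<mu> {}" by (rule measure_Un) simp
  thus ?thesis by simp
qed

lemma measure_mono: assumes "A \<subseteq> B" shows "\<mu> A \<le> \<mu> B"
proof -
  have "B = A \<union> (B - A)" using assms by auto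
  hence "\<mu> B = \<mu> A + \<mu> (B - A)" using measure_Un[of A "B - A"] by (metis Diff_disjoint)
  thus ?thesis using measure_nonneg[of "B - A"] by linarith
qed

lemma measure_UN_finite: "finite I \<Longrightarrow> disjoint_family_on B I \<Longrightarrow> \<mu> (\<Union>i\<in>I. B i) = (\<Sum>i\<in>I. \<mu> (B i))"
proof (induction I rule: finite_induct)
  case empty
  then show ?case by (simp add: measure_empty)
next
  case (insert i I)
  have d: "disjoint_family_on B I" using insert.prems disjoint_family_on_mono by blast
  have "B i \<inter> (\<Union>j\<in>I. B j) = {}" using insert.prems insert.hyps(2)
    by (fastforce simp: disjoint_family_on_def)
  hence "\<mu> (\<Union>j\<in>insert i I. B j) = \<mu> (B i) + \<mu> (\<Union>j\<in>I. B j)" using measure_Un by simp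
  then show ?case using insert.IH[OF d] insert.hyps by simp
qed

lemma measure_Un_le: "\<mu> (A \<union> B) \<le> \<mu> A + \<mu> B"
proof -
  have "A \<union> B = A \<union> (B - A)" by auto
  hence "\<mu> (A \<union> B) = \<mu> A + \<mu> (B - A)" using measure_Un[of A "B - A"] by (metis Diff_disjoint)
  thus ?thesis using measure_mono[of "B - A" B] by auto
qed

lemma measure_finite_null:
  assumes sing: "\<forall>x. \<mu> {x} = 0" and "finite A" shows "\<mu> A = 0"
  using assms(2)
proof (induction A rule: finite_induct)
  case empty then show ?case by (simp add: measure_empty)
next
  case (insert x A)
  have "\<mu> (insert x A) \<le> \<mu> {x} + \<mu> A" using measure_Un_le[of "{x}" A] by simp
  then show ?case using sing insert.IH measure_nonneg[of "insert x A"] by simp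
qed

text \<open>The integral may be computed along any finitely valued \<open>h\<close> through which \<open>s\<close> factors; this
  puts two step functions on a common partition.\<close>
lemma step_integral_factor:
  assumes Y: "finite Y" "range h \<subseteq> Y" and sg: "\<And>x. s x = g (h x)"
  shows "step_integral \<mu> s = (\<Sum>y\<in>Y. g y * \<mu> (h -` {y}))"
proof -
  have rs: "range s \<subseteq> g ` Y" using Y(2) sg by auto
  have pre: "s -` {v} = (\<Union>y\<in>{y\<in>Y. g y = v}. h -` {y})" for v
    using Y(2) sg by (auto simp: image_subset_iff)
  have mv: "\<mu> (s -` {v}) = (\<Sum>y\<in>{y\<in>Y. g y = v}. \<mu> (h -` {y}))" for v
    unfolding pre by (rule measure_UN_finite) (use Y(1) in \<open>auto simp: disjoint_family_on_def\<close>)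
  have "step_integral \<mu> s = (\<Sum>v\<in>g ` Y. v * \<mu> (s -` {v}))"
    unfolding step_integral_def
  proof (rule sum.mono_neutral_left)
    show "finite (g ` Y)" using Y(1) by simp
    show "range s \<subseteq> g ` Y" by (rule rs)
    show "\<forall>v\<in>g ` Y - range s. v * \<mu> (s -` {v}) = 0"
    proof
      fix v assume "v \<in> g ` Y - range s"
      hence "s -` {v} = {}" by (auto simp: image_iff) (metis rangeI)
      thus "v * \<mu> (s -` {v}) = 0" by (simp add: measure_empty)
    qed
  qed
  also have "\<dots> = (\<Sum>v\<in>g ` Y. \<Sum>y\<in>{y\<in>Y. g y = v}. g y * \<mu> (h -` {y}))"
    unfolding mv sum_distrib_left by (intro sum.cong refl) auto
  also have "\<dots> = (\<Sum>y\<in>Y. g y * \<mu> (h -` {y}))"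
    by (rule sum.group) (use Y(1) in auto)
  finally show ?thesis .
qed

lemma step_integral_add_scaled:
  assumes s: "finite (range s)" and t: "finite (range t)"
  shows "step_integral \<mu> (\<lambda>x. s x + c * t x) = step_integral \<mu> s + c * step_integral \<mu> t"
proof -
  define h where "h = (\<lambda>x. (s x, t x))"
  have fY: "finite (range h)"
  proof -
    have "range h \<subseteq> range s \<times> range t" by (auto simp: h_def)
    thus ?thesis using s t by (auto intro: finite_subset)
  qed
  have 1: "step_integral \<mu> (\<lambda>x. s x + c * t x) = (\<Sum>y\<in>range h. (fst y + c * snd y) * \<mu> (h -` {y}))"
    by (rule step_integral_factor[OF fY]) (auto simp: h_def)
  have 2: "step_integral \<mu> s = (\<Sum>y\<in>range h. fst y * \<mu> (h -` {y}))"
    by (rule step_integral_factor[OF fY]) (auto simp: h_def)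
  have 3: "step_integral \<mu> t = (\<Sum>y\<in>range h. snd y * \<mu> (h -` {y}))"
    by (rule step_integral_factor[OF fY]) (auto simp: h_def)
  show ?thesis unfolding 1 2 3
    by (simp add: algebra_simps sum.distrib sum_distrib_left)
qed

lemma step_integral_mono:
  assumes s: "finite (range s)" and t: "finite (range t)" and le: "\<And>x. s x \<le> t x"
  shows "step_integral \<mu> s \<le> step_integral \<mu> t"
proof -
  define h where "h = (\<lambda>x. (s x, t x))"
  have fY: "finite (range h)"
  proof -
    have "range h \<subseteq> range s \<times> range t" by (auto simp: h_def)
    thus ?thesis using s t by (auto intro: finite_subset)
  qed
  have 2: "step_integral \<mu> s = (\<Sum>y\<in>range h. fst y * \<mu> (h -` {y}))"
    by (rule step_integral_factor[OF fY]) (auto simp: h_def)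
  have 3: "step_integral \<mu> t = (\<Sum>y\<in>range h. snd y * \<mu> (h -` {y}))"
    by (rule step_integral_factor[OF fY]) (auto simp: h_def)
  show ?thesis unfolding 2 3
  proof (rule sum_mono)
    fix y assume "y \<in> range h"
    then obtain x where "y = (s x, t x)" by (auto simp: h_def)
    thus "fst y * \<mu> (h -` {y}) \<le> snd y * \<mu> (h -` {y})"
      using le[of x] measure_nonneg by (simp add: mult_right_mono)
  qed
qed

lemma step_integral_const: "step_integral \<mu> (\<lambda>_. c) = c"
  by (simp add: step_integral_def measure_UNIV)

lemma step_integral_indicator: "step_integral \<mu> (indicator A) = \<mu> A"
proof -
  have "step_integral \<mu> (indicator A) =
        (\<Sum>b\<in>UNIV. (if b then 1 else 0) * \<mu> ((\<lambda>x. x \<in> A) -` {b}))"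
    by (rule step_integral_factor) (auto simp: indicator_def)
  also have "\<dots> = \<mu> A" by (simp add: UNIV_bool vimage_def)
  finally show ?thesis .
qed

lemma step_integral_diff_le:
  assumes s: "finite (range s)" and t: "finite (range t)" and le: "\<And>x. \<bar>s x - t x\<bar> \<le> e"
  shows "\<bar>step_integral \<mu> s - step_integral \<mu> t\<bar> \<le> e"
proof -
  have l1: "s x \<le> t x + e * 1" and l2: "t x \<le> s x + e * 1" for x
    using le[of x] by (simp_all add: abs_le_iff)
  have "step_integral \<mu> s \<le> step_integral \<mu> (\<lambda>x. t x + e * 1)"
    using l1 by (intro step_integral_mono s finite_range_add_scaled t finite_range_const)
  also have "\<dots> = step_integral \<mu> t + e" using step_integral_add_scaled[OF t finite_range_const, of e 1] step_integral_const by simp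
  finally have a: "step_integral \<mu> s \<le> step_integral \<mu> t + e" .
  have "step_integral \<mu> t \<le> step_integral \<mu> (\<lambda>x. s x + e * 1)"
    using l2 by (intro step_integral_mono s finite_range_add_scaled t finite_range_const)
  also have "\<dots> = step_integral \<mu> s + e" using step_integral_add_scaled[OF s finite_range_const, of e 1] step_integral_const by simp
  finally have b: "step_integral \<mu> t \<le> step_integral \<mu> s + e" .
  show ?thesis using a b by linarith
qed


lemma step_integral_grid_round_diff_le:
  assumes "bounded (range f)"
  shows "\<bar>step_integral \<mu> (grid_round n f) - step_integral \<mu> (grid_round m f)\<bar> \<le> inverse (real (Suc n)) + inverse (real (Suc m))"
proof (rule step_integral_diff_le[OF finite_range_grid_round[OF assms] finite_range_grid_round[OF assms]])
  fix x
  show "\<bar>grid_round n f x - grid_round m f x\<bar> \<le> inverse (real (Suc n)) + inverse (real (Suc m))"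
    using grid_round_close[of f x n] grid_round_close[of f x m] by linarith
qed

lemma fa_integral_LIMSEQ: assumes f: "bounded (range f)" shows "(\<lambda>n. step_integral \<mu> (grid_round n f)) \<longlonglongrightarrow> fa_integral \<mu> f"
proof -
  have "Cauchy (\<lambda>n. step_integral \<mu> (grid_round n f))"
  proof (rule CauchyI)
    fix e :: real assume e: "0 < e"
    obtain M where M: "inverse (real (Suc M)) < e / 2" using reals_Archimedean[of "e/2"] e by auto
    show "\<exists>M. \<forall>m\<ge>M. \<forall>n\<ge>M. norm (step_integral \<mu> (grid_round m f) - step_integral \<mu> (grid_round n f)) < e"
    proof (intro exI allI impI)
      fix m n assume mn: "M \<le> m" "M \<le> n"
      have i1: "inverse (real (Suc m)) \<le> inverse (real (Suc M))" using mn(1) by (simp add: le_imp_inverse_le)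
      have i2: "inverse (real (Suc n)) \<le> inverse (real (Suc M))" using mn(2) by (simp add: le_imp_inverse_le)
      have "\<bar>step_integral \<mu> (grid_round m f) - step_integral \<mu> (grid_round n f)\<bar> < e"
        using step_integral_grid_round_diff_le[OF f, of m n] M i1 i2 by linarith
      thus "norm (step_integral \<mu> (grid_round m f) - step_integral \<mu> (grid_round n f)) < e" by simp
    qed
  qed
  hence "convergent (\<lambda>n. step_integral \<mu> (grid_round n f))" by (simp add: Cauchy_convergent_iff)
  thus ?thesis by (simp add: fa_integral_def convergent_LIMSEQ_iff)
qed

lemma fa_integral_approx:
  assumes f: "bounded (range f)" and s: "finite (range s)" and le: "\<And>x. \<bar>f x - s x\<bar> \<le> e"
  shows "\<bar>fa_integral \<mu> f - step_integral \<mu> s\<bar> \<le> e"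
proof -
  have b: "\<bar>step_integral \<mu> (grid_round n f) - step_integral \<mu> s\<bar> \<le> inverse (real (Suc n)) + e" for n
  proof (rule step_integral_diff_le[OF finite_range_grid_round[OF f] s])
    fix x
    show "\<bar>grid_round n f x - s x\<bar> \<le> inverse (real (Suc n)) + e"
      using grid_round_close[of f x n] le[of x] by linarith
  qed
  have lim1: "(\<lambda>n. \<bar>step_integral \<mu> (grid_round n f) - step_integral \<mu> s\<bar>) \<longlonglongrightarrow> \<bar>fa_integral \<mu> f - step_integral \<mu> s\<bar>"
    by (intro tendsto_rabs tendsto_diff fa_integral_LIMSEQ f tendsto_const)
  have lim2: "(\<lambda>n. inverse (real (Suc n)) + e) \<longlonglongrightarrow> 0 + e"
    by (intro tendsto_add LIMSEQ_inverse_real_of_nat tendsto_const)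
  have "\<bar>fa_integral \<mu> f - step_integral \<mu> s\<bar> \<le> 0 + e"
    by (rule LIMSEQ_le[OF lim1 lim2]) (use b in auto)
  thus ?thesis by simp
qed

lemma fa_integral_finite_range: "finite (range s) \<Longrightarrow> fa_integral \<mu> s = step_integral \<mu> s"
  using fa_integral_approx[OF finite_imp_bounded, of s s 0] by simp

lemma fa_integral_const: "fa_integral \<mu> (\<lambda>_. c) = c"
  by (simp add: fa_integral_finite_range finite_range_const step_integral_const)

lemma fa_integral_indicator: "fa_integral \<mu> (indicator A) = \<mu> A"
proof -
  have "range (indicator A :: 'a \<Rightarrow> real) \<subseteq> {0, 1}" by (auto simp: indicator_def)
  hence "finite (range (indicator A :: 'a \<Rightarrow> real))" by (rule finite_subset) simp
  thus ?thesis by (simp add: fa_integral_finite_range step_integral_indicator)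
qed

lemma fa_integral_add_scaled:
  assumes f: "bounded (range f)" and g: "bounded (range g)"
  shows "fa_integral \<mu> (\<lambda>x. f x + c * g x) = fa_integral \<mu> f + c * fa_integral \<mu> g"
proof -
  have "\<bar>fa_integral \<mu> (\<lambda>x. f x + c * g x) - fa_integral \<mu> f - c * fa_integral \<mu> g\<bar> \<le> (2 + 2 * \<bar>c\<bar>) * inverse (real (Suc n))" for n
  proof -
    define d where "d = inverse (real (Suc n))"
    have d0: "d \<ge> 0" by (simp add: d_def)
    define s t where "s = grid_round n f" and "t = grid_round n g"
    have ss: "finite (range s)" "finite (range t)" using finite_range_grid_round f g by (auto simp: s_def t_def)
    have h1: "\<bar>fa_integral \<mu> (\<lambda>x. f x + c * g x) - step_integral \<mu> (\<lambda>x. s x + c * t x)\<bar> \<le> d + \<bar>c\<bar> * d"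
    proof (rule fa_integral_approx[OF bounded_range_add_scaled[OF f g] finite_range_add_scaled[OF ss]])
      fix x
      have "\<bar>f x + c * g x - (s x + c * t x)\<bar> \<le> \<bar>f x - s x\<bar> + \<bar>c\<bar> * \<bar>g x - t x\<bar>"
        by (metis (no_types) abs_mult abs_triangle_ineq add_diff_add right_diff_distrib)
      also have "\<dots> \<le> d + \<bar>c\<bar> * d"
        using grid_round_close[of f x n] grid_round_close[of g x n]
        by (intro add_mono mult_left_mono) (auto simp: s_def t_def d_def)
      finally show "\<bar>f x + c * g x - (s x + c * t x)\<bar> \<le> d + \<bar>c\<bar> * d" .
    qed
    have h2: "\<bar>fa_integral \<mu> f - step_integral \<mu> s\<bar> \<le> d"
      by (rule fa_integral_approx[OF f ss(1)]) (use grid_round_close in \<open>auto simp: s_def d_def\<close>)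
    have h3: "\<bar>fa_integral \<mu> g - step_integral \<mu> t\<bar> \<le> d"
      by (rule fa_integral_approx[OF g ss(2)]) (use grid_round_close in \<open>auto simp: t_def d_def\<close>)
    have h3': "\<bar>c * fa_integral \<mu> g - c * step_integral \<mu> t\<bar> \<le> \<bar>c\<bar> * d"
      using h3 by (metis abs_mult abs_ge_zero mult_left_mono right_diff_distrib)
    have e: "step_integral \<mu> (\<lambda>x. s x + c * t x) = step_integral \<mu> s + c * step_integral \<mu> t" by (rule step_integral_add_scaled[OF ss])
    have "\<bar>fa_integral \<mu> (\<lambda>x. f x + c * g x) - fa_integral \<mu> f - c * fa_integral \<mu> g\<bar> \<le> d + \<bar>c\<bar> * d + d + \<bar>c\<bar> * d"
      using h1 h2 h3' e by linarith
    thus ?thesis by (simp add: d_def algebra_simps)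
  qed
  from eq_0_if_abs_le_inverse_Suc[OF this] show ?thesis by simp
qed

lemma fa_integral_nonneg:
  assumes f: "bounded (range f)" and nn: "\<And>x. f x \<ge> 0"
  shows "fa_integral \<mu> f \<ge> 0"
proof -
  have "step_integral \<mu> (\<lambda>_. 0) \<le> step_integral \<mu> (grid_round n f)" for n
    by (rule step_integral_mono[OF finite_range_const finite_range_grid_round[OF f]]) (simp add: grid_round_nonneg nn)
  hence "0 \<le> step_integral \<mu> (grid_round n f)" for n by (simp add: step_integral_const)
  thus ?thesis by (intro LIMSEQ_le_const[OF fa_integral_LIMSEQ[OF f]]) auto
qed

lemma fa_cintegral_add_scaled:
  assumes f: "f \<in> linf" and g: "g \<in> linf"
  shows "fa_cintegral \<mu> (\<lambda>x. f x + c * g x) = fa_cintegral \<mu> f + c * fa_cintegral \<mu> g"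
proof -
  note Re_f = bounded_range_Re[OF f] and Re_g = bounded_range_Re[OF g]
    and Im_f = bounded_range_Im[OF f] and Im_g = bounded_range_Im[OF g]
  have re: "(\<lambda>x. Re (f x + c * g x)) = (\<lambda>x. (Re (f x) + Re c * Re (g x)) + (- Im c) * Im (g x))"
    by (auto simp: fun_eq_iff)
  have r: "fa_integral \<mu> (\<lambda>x. Re (f x + c * g x)) = fa_integral \<mu> (\<lambda>x. Re (f x))
      + Re c * fa_integral \<mu> (\<lambda>x. Re (g x)) - Im c * fa_integral \<mu> (\<lambda>x. Im (g x))"
    unfolding re fa_integral_add_scaled[OF bounded_range_add_scaled[OF Re_f Re_g] Im_g]
      fa_integral_add_scaled[OF Re_f Re_g] by simp
  have im: "(\<lambda>x. Im (f x + c * g x)) = (\<lambda>x. (Im (f x) + Re c * Im (g x)) + Im c * Re (g x))"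
    by (auto simp: fun_eq_iff algebra_simps)
  have i: "fa_integral \<mu> (\<lambda>x. Im (f x + c * g x)) = fa_integral \<mu> (\<lambda>x. Im (f x))
      + Re c * fa_integral \<mu> (\<lambda>x. Im (g x)) + Im c * fa_integral \<mu> (\<lambda>x. Re (g x))"
    unfolding im fa_integral_add_scaled[OF bounded_range_add_scaled[OF Im_f Im_g] Re_g]
      fa_integral_add_scaled[OF Im_f Im_g] by simp
  show ?thesis unfolding fa_cintegral_def complex_eq_iff using r i by (simp add: algebra_simps)
qed

lemma linf_state_fa_cintegral: "linf_state (fa_cintegral \<mu>)"
  unfolding linf_state_def
proof (intro conjI ballI allI impI)
  show "fa_cintegral \<mu> (\<lambda>x. f x + c * g x) = fa_cintegral \<mu> f + c * fa_cintegral \<mu> g" if "f \<in> linf" "g \<in> linf" for f g c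
    by (rule fa_cintegral_add_scaled[OF that])
  show "cnonneg (fa_cintegral \<mu> f)" if "f \<in> linf" "\<forall>x. cnonneg (f x)" for f
  proof -
    have "(\<lambda>x. Im (f x)) = (\<lambda>_. 0)" using that(2) by (auto simp: cnonneg_def)
    hence "fa_integral \<mu> (\<lambda>x. Im (f x)) = 0" by (simp add: fa_integral_const)
    moreover have "fa_integral \<mu> (\<lambda>x. Re (f x)) \<ge> 0"
      using that by (intro fa_integral_nonneg bounded_range_Re) (auto simp: cnonneg_def)
    ultimately show ?thesis by (simp add: fa_cintegral_def cnonneg_def)
  qed
  show "fa_cintegral \<mu> (\<lambda>_. 1) = 1" by (simp add: fa_cintegral_def fa_integral_const complex_eq_iff)
qed

lemma fa_integral_finite_support:
  assumes sing: "\<forall>x. \<mu> {x} = 0" and fin: "finite {x. h x \<noteq> 0}"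
  shows "fa_integral \<mu> h = 0"
proof -
  have "range h \<subseteq> insert 0 (h ` {x. h x \<noteq> 0})" by auto
  moreover have "finite (insert 0 (h ` {x. h x \<noteq> 0}))" using fin by simp
  ultimately have sh: "finite (range h)" by (rule finite_subset)
  have "step_integral \<mu> h = 0" unfolding step_integral_def
  proof (rule sum.neutral, rule ballI)
    fix v assume "v \<in> range h"
    show "v * \<mu> (h -` {v}) = 0"
    proof (cases "v = 0")
      case False
      hence "h -` {v} \<subseteq> {x. h x \<noteq> 0}" by auto
      hence "finite (h -` {v})" using fin by (rule finite_subset)
      thus ?thesis using measure_finite_null[OF sing] by simp
    qed simp
  qed
  thus ?thesis using fa_integral_finite_range[OF sh] by simp
qed

lemma linf_singular_fa_cintegral:
  assumes sing: "\<forall>x. \<mu> {x} = 0" shows "linf_singular (fa_cintegral \<mu>)"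
  unfolding linf_singular_def
proof (intro allI impI)
  fix f :: "'a \<Rightarrow> complex" assume fin: "finite {x. f x \<noteq> 0}"
  have "finite {x. Re (f x) \<noteq> 0}" "finite {x. Im (f x) \<noteq> 0}"
    by (rule finite_subset[OF _ fin], auto)+
  thus "fa_cintegral \<mu> f = 0" by (simp add: fa_cintegral_def fa_integral_finite_support[OF sing] complex_eq_iff)
qed

lemma fa_cintegral_linf_proj: "linf_proj p \<Longrightarrow> fa_cintegral \<mu> p = complex_of_real (\<mu> {y. p y = 1})"
proof -
  assume p: "linf_proj p"
  have e1: "(\<lambda>x. Re (p x)) = indicator {y. p y = 1}"
    using linf_proj_cases[OF p] by (force simp: fun_eq_iff split: split_indicator)
  have e2: "(\<lambda>x. Im (p x)) = (\<lambda>_. 0)"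
  proof (rule ext)
    fix x show "Im (p x) = 0" using linf_proj_cases[OF p, of x] by auto
  qed
  have "fa_cintegral \<mu> p = Complex (fa_integral \<mu> (indicator {y. p y = 1})) (fa_integral \<mu> (\<lambda>_. 0))"
    unfolding fa_cintegral_def e1 e2 ..
  also have "\<dots> = Complex (\<mu> {y. p y = 1}) 0" unfolding fa_integral_indicator fa_integral_const ..
  finally show ?thesis by (simp add: complex_eq_iff)
qed

lemma linf_regular_fa_cintegral:
  assumes reg: "regular_measure \<mu>" shows "linf_regular (fa_cintegral \<mu>)"
  unfolding linf_regular_def
proof (intro allI impI)
  fix P :: "nat \<Rightarrow> 'a \<Rightarrow> complex" and q
  assume a: "(\<forall>n. linf_proj (P n) \<and> fa_cintegral \<mu> (P n) = 0) \<and> linf_proj_sup P q"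
  have P: "\<forall>n. linf_proj (P n)" using a by blast
  have q: "linf_proj q" using a by (simp add: linf_proj_sup_def)
  have "\<mu> {y. P n y = 1} = 0" for n using a fa_cintegral_linf_proj[of "P n"] by auto
  hence U: "\<mu> (\<Union>n. {y. P n y = 1}) = 0" using reg by (simp add: regular_measure_def)
  have "{y. q y = 1} \<subseteq> (\<Union>n. {y. P n y = 1})"
    using linf_proj_sup_support[OF P] a by fastforce
  hence "\<mu> {y. q y = 1} \<le> 0" using measure_mono U by metis
  hence "\<mu> {y. q y = 1} = 0" using measure_nonneg by (meson antisym)
  thus "fa_cintegral \<mu> q = 0" using fa_cintegral_linf_proj[OF q] by simp
qed

end

section \<open>States on \<open>l\<^sup>\<infinity>\<close>\<close>

lemma bounded_range_const: "bounded (range (\<lambda>_. c :: real))"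
  by (simp add: bounded_range_real_iff)

lemma bounded_range_scaled_indicator: "bounded (range (\<lambda>x. c * indicator A x :: real))"
  unfolding bounded_range_real_iff by (auto intro: exI[of _ "\<bar>c\<bar>"] split: split_indicator)

locale state_linf =
  fixes \<phi> :: "('a \<Rightarrow> complex) \<Rightarrow> complex"
  assumes state: "linf_state \<phi>"
begin

lemma add_scaled: "f \<in> linf \<Longrightarrow> g \<in> linf \<Longrightarrow> \<phi> (\<lambda>x. f x + c * g x) = \<phi> f + c * \<phi> g"
  using state by (simp add: linf_state_def)

lemma nonneg: "f \<in> linf \<Longrightarrow> \<forall>x. cnonneg (f x) \<Longrightarrow> cnonneg (\<phi> f)"
  using state by (simp add: linf_state_def)

lemma one: "\<phi> (\<lambda>_. 1) = 1"
  using state by (simp add: linf_state_def)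

lemma zero: "\<phi> (\<lambda>_. 0) = 0"
proof -
  have "\<phi> (\<lambda>x. (\<lambda>_. 0) x + 1 * (\<lambda>_. 0) x) = \<phi> (\<lambda>_. 0) + 1 * \<phi> (\<lambda>_. 0)"
    by (rule add_scaled[OF linf_const linf_const])
  thus ?thesis by simp
qed

lemma mult_const: "f \<in> linf \<Longrightarrow> \<phi> (\<lambda>x. c * f x) = c * \<phi> f"
proof -
  assume f: "f \<in> linf"
  have "\<phi> (\<lambda>x. (\<lambda>_. 0) x + c * f x) = \<phi> (\<lambda>_. 0) + c * \<phi> f"
    by (rule add_scaled[OF linf_const f])
  thus ?thesis by (simp add: zero)
qed

lemma const: "\<phi> (\<lambda>_. c) = c"
proof -
  have "\<phi> (\<lambda>x. c * (\<lambda>_. 1) x) = c * \<phi> (\<lambda>_. 1)" by (rule mult_const[OF linf_const])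
  thus ?thesis by (simp add: one)
qed

lemma real_valued: assumes g: "bounded (range g)" shows "Im (\<phi> (\<lambda>x. complex_of_real (g x))) = 0"
proof -
  obtain B where B: "\<forall>x. \<bar>g x\<bar> \<le> B" using g by (auto simp: bounded_range_real_iff)
  have gb: "bounded (range (\<lambda>x. g x + B * 1))" by (rule bounded_range_add_scaled[OF g]) (auto simp: bounded_range_real_iff)
  have "cnonneg (\<phi> (\<lambda>x. complex_of_real (g x + B * 1)))"
  proof (rule nonneg[OF linf_of_real[OF gb]], rule allI)
    fix x show "cnonneg (complex_of_real (g x + B * 1))"
      using B[rule_format, of x] by (simp add: cnonneg_def abs_le_iff)
  qed
  moreover have "(\<lambda>x. complex_of_real (g x + B * 1)) = (\<lambda>x. complex_of_real (g x) + complex_of_real B * (\<lambda>_. 1) x)"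
    by simp
  moreover have "\<phi> (\<lambda>x. complex_of_real (g x) + complex_of_real B * (\<lambda>_. 1) x) = \<phi> (\<lambda>x. complex_of_real (g x)) + complex_of_real B * \<phi> (\<lambda>_. 1)"
    by (rule add_scaled[OF linf_of_real[OF g] linf_const])
  ultimately have "cnonneg (\<phi> (\<lambda>x. complex_of_real (g x)) + complex_of_real B)" by (simp add: one)
  thus ?thesis by (simp add: cnonneg_def)
qed

lemma mono:
  assumes g: "bounded (range g)" and k: "bounded (range k)" and le: "\<And>x. g x \<le> k x"
  shows "Re (\<phi> (\<lambda>x. complex_of_real (g x))) \<le> Re (\<phi> (\<lambda>x. complex_of_real (k x)))"
proof -
  have kg: "bounded (range (\<lambda>x. k x + (-1) * g x))" by (rule bounded_range_add_scaled[OF k g])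
  have "cnonneg (\<phi> (\<lambda>x. complex_of_real (k x + (-1) * g x)))"
  proof (rule nonneg[OF linf_of_real[OF kg]], rule allI)
    fix x show "cnonneg (complex_of_real (k x + (-1) * g x))" using le[of x] by (simp add: cnonneg_def)
  qed
  moreover have "(\<lambda>x. complex_of_real (k x + (-1) * g x)) = (\<lambda>x. complex_of_real (k x) + (-1) * complex_of_real (g x))"
    by simp
  moreover have "\<phi> (\<lambda>x. complex_of_real (k x) + (-1) * complex_of_real (g x)) = \<phi> (\<lambda>x. complex_of_real (k x)) + (-1) * \<phi> (\<lambda>x. complex_of_real (g x))"
    by (rule add_scaled[OF linf_of_real[OF k] linf_of_real[OF g]])
  ultimately show ?thesis by (simp add: cnonneg_def)
qed

lemma abs_le:
  assumes g: "bounded (range g)" and le: "\<And>x. \<bar>g x\<bar> \<le> e"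
  shows "\<bar>Re (\<phi> (\<lambda>x. complex_of_real (g x)))\<bar> \<le> e"
proof -
  have c: "bounded (range (\<lambda>_. c))" for c :: real by (auto simp: bounded_range_real_iff)
  have "Re (\<phi> (\<lambda>x. complex_of_real (g x))) \<le> Re (\<phi> (\<lambda>x. complex_of_real ((\<lambda>_. e) x)))"
    by (rule mono[OF g c]) (simp add: abs_le_D1[OF le])
  moreover have "Re (\<phi> (\<lambda>x. complex_of_real ((\<lambda>_. -e) x))) \<le> Re (\<phi> (\<lambda>x. complex_of_real (g x)))"
    by (rule mono[OF c g]) (metis abs_le_D2 le minus_le_iff)
  ultimately show ?thesis by (simp add: const)
qed

lemma Re_Im_decomp:
  assumes h: "h \<in> linf"
  shows "\<phi> h = \<phi> (\<lambda>x. complex_of_real (Re (h x))) + \<i> * \<phi> (\<lambda>x. complex_of_real (Im (h x)))"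
proof -
  have "h = (\<lambda>x. complex_of_real (Re (h x)) + \<i> * complex_of_real (Im (h x)))"
    by (rule ext) (simp add: complex_eq_iff)
  moreover have "\<phi> (\<lambda>x. complex_of_real (Re (h x)) + \<i> * complex_of_real (Im (h x))) =
      \<phi> (\<lambda>x. complex_of_real (Re (h x))) + \<i> * \<phi> (\<lambda>x. complex_of_real (Im (h x)))"
    by (rule add_scaled[OF linf_of_real[OF bounded_range_Re[OF h]] linf_of_real[OF bounded_range_Im[OF h]]])
  ultimately show ?thesis by metis
qed

lemma norm_le:
  assumes h: "h \<in> linf" and le: "\<And>x. cmod (h x) \<le> e"
  shows "cmod (\<phi> h) \<le> 2 * e"
proof -
  define a b where "a = \<phi> (\<lambda>x. complex_of_real (Re (h x)))" and "b = \<phi> (\<lambda>x. complex_of_real (Im (h x)))"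
  have a: "cmod a \<le> e" unfolding a_def
    using cmod_eq_Re[OF real_valued[OF bounded_range_Re[OF h]]] abs_le[OF bounded_range_Re[OF h], of e] le
    by (metis abs_Re_le_cmod order_trans)
  have b: "cmod b \<le> e" unfolding b_def
    using cmod_eq_Re[OF real_valued[OF bounded_range_Im[OF h]]] abs_le[OF bounded_range_Im[OF h], of e] le
    by (metis abs_Im_le_cmod order_trans)
  have "cmod (\<phi> h) = cmod (a + \<i> * b)" using Re_Im_decomp[OF h] by (simp add: a_def b_def)
  also have "\<dots> \<le> cmod a + cmod (\<i> * b)" by (rule norm_triangle_ineq)
  also have "\<dots> \<le> 2 * e" using a b by (simp add: norm_mult)
  finally show ?thesis .
qed


lemma indicator_eq_0_if_Re_le_0:
  assumes "Re (\<phi> (indicator A)) \<le> 0" shows "\<phi> (indicator A) = 0"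
proof -
  have "cnonneg (\<phi> (indicator A))"
    by (rule nonneg[OF linf_indicator]) (simp add: cnonneg_def split: split_indicator)
  thus ?thesis using assms by (simp add: cnonneg_def complex_eq_iff)
qed

lemma indicator_eq_0_if_dominated:
  assumes g: "bounded (range g)" and le: "\<And>x. indicator A x \<le> g x"
    and z: "\<phi> (\<lambda>x. complex_of_real (g x)) = 0"
  shows "\<phi> (indicator A) = 0"
proof (rule indicator_eq_0_if_Re_le_0)
  have "Re (\<phi> (\<lambda>x. complex_of_real (indicator A x))) \<le> Re (\<phi> (\<lambda>x. complex_of_real (g x)))"
    by (rule mono[OF bounded_range_scaled_indicator[of 1, simplified] g le])
  thus "Re (\<phi> (indicator A)) \<le> 0" using z by (simp add: of_real_indicator)
qed

lemma vanishes_off_null_real: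
  assumes g: "bounded (range g)" and N: "\<And>x. x \<notin> N \<Longrightarrow> g x = 0"
    and z: "\<phi> (indicator N) = 0"
  shows "\<phi> (\<lambda>x. complex_of_real (g x)) = 0"
proof -
  obtain K where K: "\<And>x. \<bar>g x\<bar> \<le> K" using g by (auto simp: bounded_range_real_iff)
  have scaled: "\<phi> (\<lambda>x. complex_of_real (c * indicator N x)) = 0" for c
    using mult_const[OF linf_indicator, of "complex_of_real c" N] z by (simp add: of_real_indicator)
  have "g x \<le> K * indicator N x" "- K * indicator N x \<le> g x" for x
    using K[of x] N[of x] by (auto simp: abs_le_iff split: split_indicator)
  from mono[OF g bounded_range_scaled_indicator this(1)] mono[OF bounded_range_scaled_indicator g this(2)]
  have "Re (\<phi> (\<lambda>x. complex_of_real (g x))) \<le> 0" "0 \<le> Re (\<phi> (\<lambda>x. complex_of_real (g x)))"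
    unfolding scaled by simp_all
  thus ?thesis using real_valued[OF g] by (simp add: complex_eq_iff)
qed

lemma vanishes_off_null:
  assumes h: "h \<in> linf" and N: "\<And>x. x \<notin> N \<Longrightarrow> h x = 0" and z: "\<phi> (indicator N) = 0"
  shows "\<phi> h = 0"
  using Re_Im_decomp[OF h] vanishes_off_null_real[OF bounded_range_Re[OF h] _ z]
    vanishes_off_null_real[OF bounded_range_Im[OF h] _ z] N by simp

lemma null_UN:
  fixes A :: "nat \<Rightarrow> 'a set"
  assumes reg: "linf_regular \<phi>" and A: "\<And>n. \<phi> (indicator (A n)) = 0"
  shows "\<phi> (indicator (\<Union>n. A n)) = 0"
proof -
  have "\<forall>n. linf_proj (indicator (A n)) \<and> \<phi> (indicator (A n)) = 0"
    using A linf_proj_indicator by blast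
  with reg[unfolded linf_regular_def, rule_format, of "\<lambda>n. indicator (A n)"] linf_proj_sup_indicator[of A]
  show ?thesis by blast
qed

text \<open>For \<open>g \<ge> 0\<close> with \<open>\<phi> g = 0\<close>, each level set \<open>{g \<ge> 1/(k+1)}\<close> is null (its indicator is at most
  \<open>(k+1) g\<close>), and regularity makes their union, the support of \<open>g\<close>, null.\<close>
lemma support_null:
  assumes reg: "linf_regular \<phi>" and g: "bounded (range g)" and g0: "\<And>x. 0 \<le> g x"
    and z: "\<phi> (\<lambda>x. complex_of_real (g x)) = 0"
  shows "\<phi> (indicator {x. g x \<noteq> 0}) = 0"
proof -
  define A where "A k = {x. inverse (real (Suc k)) \<le> g x}" for k
  have "\<phi> (indicator (A k)) = 0" for k
  proof (rule indicator_eq_0_if_dominated)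
    show "bounded (range (\<lambda>x. real (Suc k) * g x))"
      using bounded_range_add_scaled[OF bounded_range_const g, of 0] by simp
    show "indicator (A k) x \<le> real (Suc k) * g x" for x
      using g0[of x] mult_left_mono[of "inverse (real (Suc k))" "g x" "real (Suc k)"]
      by (auto simp: A_def split: split_indicator)
    show "\<phi> (\<lambda>x. complex_of_real (real (Suc k) * g x)) = 0"
      using mult_const[OF linf_of_real[OF g], of "of_nat (Suc k)"] z by simp
  qed
  moreover have "{x. g x \<noteq> 0} = (\<Union>k. A k)"
  proof (intro equalityI subsetI)
    fix x assume "x \<in> {x. g x \<noteq> 0}"
    hence "g x > 0" using g0[of x] by simp
    then obtain k where "inverse (real (Suc k)) < g x" using reals_Archimedean by blast
    thus "x \<in> (\<Union>k. A k)" unfolding A_def by (auto intro: less_imp_le)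
  qed (auto simp: A_def)
  ultimately show ?thesis using null_UN[OF reg] by simp
qed

text \<open>A singular state vanishes on \<open>c\<^sub>0\<close>: split \<open>h\<close> into its finitely many entries of size at
  least \<open>e\<close>, which \<open>\<phi>\<close> ignores, and a remainder of sup norm below \<open>e\<close>.\<close>
lemma vanishes_at_infinity:
  assumes sg: "linf_singular \<phi>" and h: "h \<in> linf"
    and fin: "\<And>e. e > 0 \<Longrightarrow> finite {x. e \<le> cmod (h x)}"
  shows "\<phi> h = 0"
proof -
  have small: "cmod (\<phi> h) \<le> 2 * e" if e: "e > 0" for e
  proof -
    define F where "F = {x. e \<le> cmod (h x)}"
    define h1 h2 where "h1 = (\<lambda>x. if x \<in> F then h x else 0)" and "h2 = (\<lambda>x. if x \<in> F then 0 else h x)"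
    have l1: "h1 \<in> linf" by (rule linf_le[OF h]) (simp add: h1_def)
    have l2: "h2 \<in> linf" by (rule linf_le[OF h]) (simp add: h2_def)
    have "finite {x. h1 x \<noteq> 0}"
      using fin[OF e] by (rule finite_subset[rotated]) (auto simp: h1_def F_def)
    hence "\<phi> h1 = 0" using sg by (simp add: linf_singular_def)
    moreover have "h = (\<lambda>x. h1 x + 1 * h2 x)" by (auto simp: h1_def h2_def)
    ultimately have "\<phi> h = \<phi> h2" using add_scaled[OF l1 l2, of 1] by simp
    moreover have "cmod (\<phi> h2) \<le> 2 * e"
      by (rule norm_le[OF l2]) (use e in \<open>auto simp: h2_def F_def\<close>)
    ultimately show ?thesis by simp
  qed
  have "cmod (\<phi> h) \<le> 0"
  proof (rule field_le_epsilon)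
    fix e :: real assume "e > 0"
    thus "cmod (\<phi> h) \<le> 0 + e" using small[of "e / 2"] by simp
  qed
  thus ?thesis by simp
qed

end

section \<open>The measure and the diagonal state induced by a state on \<open>l\<^sup>\<infinity>\<close>\<close>

context state_linf
begin

definition state_measure :: "'a set \<Rightarrow> real" where
  "state_measure A = Re (\<phi> (indicator A))"

lemma fa_prob_measure_state_measure: "fa_prob_measure state_measure"
  unfolding fa_prob_measure_def state_measure_def
proof (intro conjI allI impI)
  show "0 \<le> Re (\<phi> (indicator A))" for A
    using nonneg[OF linf_indicator, of A] by (simp add: cnonneg_def split: split_indicator)
  show "Re (\<phi> (indicator UNIV)) = 1" by (simp add: one)
  fix A B :: "'a set" assume "A \<inter> B = {}"
  hence "indicator (A \<union> B) = (\<lambda>x. indicator A x + 1 * indicator B x :: complex)"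
    by (auto simp: fun_eq_iff split: split_indicator)
  thus "Re (\<phi> (indicator (A \<union> B))) = Re (\<phi> (indicator A)) + Re (\<phi> (indicator B))"
    using add_scaled[OF linf_indicator[of A] linf_indicator[of B], of 1] by simp
qed

lemma state_measure_eq_0_iff: "state_measure A = 0 \<longleftrightarrow> \<phi> (indicator A) = 0"
  using indicator_eq_0_if_Re_le_0[of A] by (auto simp: state_measure_def)

lemma regular_state_measure: "linf_regular \<phi> \<Longrightarrow> regular_measure state_measure"
  unfolding regular_measure_def state_measure_eq_0_iff by (blast intro: null_UN)

lemma state_measure_singleton: "linf_singular \<phi> \<Longrightarrow> state_measure {x} = 0"
  unfolding linf_singular_def state_measure_def by (simp add: indicator_eq_0_iff)

lemma bop_state_diag: "bop_state (\<lambda>T. \<phi> (bop_diag T))"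
  unfolding bop_state_def
proof (intro conjI ballI allI impI)
  show "\<phi> (bop_diag (bop_add_scaled S c T)) = \<phi> (bop_diag S) + c * \<phi> (bop_diag T)"
    if "S \<in> bop" "T \<in> bop" for S T c
    unfolding bop_diag_add_scaled by (rule add_scaled[OF bop_diag_linf[OF that(1)] bop_diag_linf[OF that(2)]])
  show "cnonneg (\<phi> (bop_diag T))" if "bop_positive T" for T
    using that by (intro nonneg bop_diag_linf allI)
      (simp_all add: bop_positive_def bop_diag_ell2_inner)
  show "\<phi> (bop_diag bop_id) = 1" by (simp add: bop_diag_id one)
qed

lemma bop_singular_diag: "linf_singular \<phi> \<Longrightarrow> bop_singular (\<lambda>T. \<phi> (bop_diag T))"
  unfolding bop_singular_def
  by (auto intro!: vanishes_at_infinity bop_diag_linf bop_compact_diag_finite simp: bop_compact_def)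

lemma bop_regular_diag:
  assumes reg: "linf_regular \<phi>" shows "bop_regular (\<lambda>T. \<phi> (bop_diag T))"
  unfolding bop_regular_def
proof (intro allI impI)
  fix P :: "nat \<Rightarrow> ('a \<Rightarrow> complex) \<Rightarrow> ('a \<Rightarrow> complex)" and Q
  assume a: "(\<forall>n. bop_proj (P n) \<and> \<phi> (bop_diag (P n)) = 0) \<and> bop_proj_sup P Q"
  hence P: "\<And>n. bop_proj (P n)" and sup: "bop_proj_sup P Q" by auto
  define r where "r n x = (ell2_norm (P n (ket x)))\<^sup>2" for n x
  have diag_r: "bop_diag (P n) = (\<lambda>x. complex_of_real (r n x))" for n
    using bop_proj_diag[OF P] by (auto simp: r_def)
  have "bounded (range (r n))" for n
    using linf_iff[THEN iffD1, OF bop_diag_linf[of "P n"]] P unfolding bop_proj_def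
    by (auto simp: bounded_range_real_iff diag_r)
  hence "\<phi> (indicator {x. r n x \<noteq> 0}) = 0" for n
    using a by (intro support_null[OF reg]) (auto simp: r_def diag_r)
  hence null: "\<phi> (indicator (\<Union>n. {x. r n x \<noteq> 0})) = 0" by (rule null_UN[OF reg])
  have "bop_diag Q y = 0" if "y \<notin> (\<Union>n. {x. r n x \<noteq> 0})" for y
  proof -
    have "P n (ket y) = (\<lambda>_. 0)" for n
      using that P ell2_norm_eq_0_iff[of "P n (ket y)"] by (auto simp: r_def bop_proj_def bop_ell2)
    thus ?thesis unfolding bop_diag_def by (rule bop_proj_sup_ket_zero[OF sup P])
  qed
  moreover have "bop_diag Q \<in> linf" using sup by (simp add: bop_proj_sup_def bop_proj_def bop_diag_linf)
  ultimately show "\<phi> (bop_diag Q) = 0" using vanishes_off_null null by blast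
qed

end

section \<open>The state on \<open>l\<^sup>\<infinity>\<close> induced by a state on \<open>B(l\<^sup>2)\<close>\<close>

locale state_bop =
  fixes \<psi> :: "(('a \<Rightarrow> complex) \<Rightarrow> ('a \<Rightarrow> complex)) \<Rightarrow> complex"
  assumes state: "bop_state \<psi>"
begin

lemma mult_op_add_scaled_eq:
  "f \<in> linf \<Longrightarrow> g \<in> linf \<Longrightarrow> \<psi> (mult_op (\<lambda>x. f x + c * g x)) = \<psi> (mult_op f) + c * \<psi> (mult_op g)"
  using state unfolding mult_op_add_scaled bop_state_def by (simp add: mult_op_bop)

lemma linf_state_mult_op: "linf_state (\<lambda>f. \<psi> (mult_op f))"
  unfolding linf_state_def
proof (intro conjI ballI allI impI)
  show "\<psi> (mult_op (\<lambda>x. f x + c * g x)) = \<psi> (mult_op f) + c * \<psi> (mult_op g)"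
    if "f \<in> linf" "g \<in> linf" for f g c
    by (rule mult_op_add_scaled_eq[OF that])
  show "cnonneg (\<psi> (mult_op f))" if "f \<in> linf" "\<forall>x. cnonneg (f x)" for f
    using state bop_positive_mult_op[OF that(1)] that(2) by (simp add: bop_state_def)
  show "\<psi> (mult_op (\<lambda>_. 1)) = 1" using state by (simp add: mult_op_one bop_state_def)
qed

lemma mult_op_zero_eq: "\<psi> (mult_op (\<lambda>_. 0)) = 0"
  using mult_op_add_scaled_eq[OF linf_const linf_const, of 0 1 0] by simp

lemma linf_singular_mult_op:
  assumes sg: "bop_singular \<psi>" shows "linf_singular (\<lambda>f. \<psi> (mult_op f))"
proof -
  have "\<psi> (mult_op f) = 0" if "finite S" "{x. f x \<noteq> 0} \<subseteq> S" for S f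
    using that
  proof (induction S arbitrary: f rule: finite_induct)
    case empty
    hence "f = (\<lambda>_. 0)" by auto
    thus ?case by (simp add: mult_op_zero_eq)
  next
    case (insert a S)
    define g where "g = (\<lambda>x. if x = a then 0 else f x)"
    have gS: "{x. g x \<noteq> 0} \<subseteq> S" using insert.prems by (auto simp: g_def)
    have "ket a \<in> linf" unfolding linf_iff by (auto intro: exI[of _ 1] simp: ket_def)
    moreover have "g \<in> linf" using insert.hyps(1) gS by (intro linf_finite_support) (rule finite_subset)
    moreover have "f = (\<lambda>x. g x + f a * ket a x)" by (auto simp: g_def ket_def fun_eq_iff)
    ultimately have "\<psi> (mult_op f) = \<psi> (mult_op g) + f a * \<psi> (mult_op (ket a))"
      using mult_op_add_scaled_eq by metis
    moreover have "\<psi> (mult_op (ket a)) = 0"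
      using sg bop_compact_mult_op_ket[of a] by (simp add: bop_singular_def)
    ultimately show ?case using insert.IH[OF gS] by simp
  qed
  thus ?thesis unfolding linf_singular_def by blast
qed

lemma linf_regular_mult_op:
  assumes reg: "bop_regular \<psi>" shows "linf_regular (\<lambda>f. \<psi> (mult_op f))"
  unfolding linf_regular_def
proof (intro allI impI)
  fix P :: "nat \<Rightarrow> 'a \<Rightarrow> complex" and q
  assume a: "(\<forall>n. linf_proj (P n) \<and> \<psi> (mult_op (P n)) = 0) \<and> linf_proj_sup P q"
  hence "\<forall>n. bop_proj (mult_op (P n)) \<and> \<psi> (mult_op (P n)) = 0"
    and "bop_proj_sup (\<lambda>n. mult_op (P n)) (mult_op q)"
    by (auto simp: bop_proj_mult_op intro: bop_proj_sup_mult_op)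
  thus "\<psi> (mult_op q) = 0"
    using reg[unfolded bop_regular_def, rule_format, of "\<lambda>n. mult_op (P n)" "mult_op q"] by blast
qed

end

lemma ex_regular_singular_linf_state_if_measure:
  fixes \<mu> :: "'a set \<Rightarrow> real"
  assumes "fa_prob_measure \<mu>" "regular_measure \<mu>" "\<forall>x. \<mu> {x} = 0"
  shows "\<exists>\<phi> :: ('a \<Rightarrow> complex) \<Rightarrow> complex. linf_state \<phi> \<and> linf_regular \<phi> \<and> linf_singular \<phi>"
proof -
  interpret fa_probability \<mu> by (rule fa_probability.intro) fact
  show ?thesis using linf_state_fa_cintegral linf_regular_fa_cintegral linf_singular_fa_cintegral assms by blast
qed

lemma ex_regular_measure_if_linf_state:
  fixes \<phi> :: "('a \<Rightarrow> complex) \<Rightarrow> complex"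
  assumes "linf_state \<phi>" "linf_regular \<phi>" "linf_singular \<phi>"
  shows "\<exists>\<mu> :: 'a set \<Rightarrow> real. fa_prob_measure \<mu> \<and> regular_measure \<mu> \<and> (\<forall>x. \<mu> {x} = 0)"
proof -
  interpret state_linf \<phi> by (rule state_linf.intro) fact
  show ?thesis using fa_prob_measure_state_measure regular_state_measure state_measure_singleton assms by blast
qed

lemma ex_regular_singular_bop_state_if_linf_state:
  fixes \<phi> :: "('a \<Rightarrow> complex) \<Rightarrow> complex"
  assumes "linf_state \<phi>" "linf_regular \<phi>" "linf_singular \<phi>"
  shows "\<exists>\<psi> :: (('a \<Rightarrow> complex) \<Rightarrow> ('a \<Rightarrow> complex)) \<Rightarrow> complex. bop_state \<psi> \<and> bop_regular \<psi> \<and> bop_singular \<psi>"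
proof -
  interpret state_linf \<phi> by (rule state_linf.intro) fact
  show ?thesis using bop_state_diag bop_regular_diag bop_singular_diag assms by blast
qed

lemma ex_regular_singular_linf_state_if_bop_state:
  fixes \<psi> :: "(('a \<Rightarrow> complex) \<Rightarrow> ('a \<Rightarrow> complex)) \<Rightarrow> complex"
  assumes "bop_state \<psi>" "bop_regular \<psi>" "bop_singular \<psi>"
  shows "\<exists>\<phi> :: ('a \<Rightarrow> complex) \<Rightarrow> complex. linf_state \<phi> \<and> linf_regular \<phi> \<and> linf_singular \<phi>"
proof -
  interpret state_bop \<psi> by (rule state_bop.intro) fact
  show ?thesis using linf_state_mult_op linf_regular_mult_op linf_singular_mult_op assms by blast
qed

theorem theorem8p2:
  assumes "uncountable (UNIV :: 'a set)"
  shows "((\<exists>\<mu> :: 'a set \<Rightarrow> real. fa_prob_measure \<mu> \<and> regular_measure \<mu> \<and> (\<forall>x. \<mu> {x} = 0))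
            \<longleftrightarrow> (\<exists>\<phi> :: ('a \<Rightarrow> complex) \<Rightarrow> complex. linf_state \<phi> \<and> linf_regular \<phi> \<and> linf_singular \<phi>))
       \<and> ((\<exists>\<phi> :: ('a \<Rightarrow> complex) \<Rightarrow> complex. linf_state \<phi> \<and> linf_regular \<phi> \<and> linf_singular \<phi>)
            \<longleftrightarrow> (\<exists>\<psi> :: (('a \<Rightarrow> complex) \<Rightarrow> ('a \<Rightarrow> complex)) \<Rightarrow> complex.
                   bop_state \<psi> \<and> bop_regular \<psi> \<and> bop_singular \<psi>))"
  using ex_regular_singular_linf_state_if_measure ex_regular_measure_if_linf_state
    ex_regular_singular_bop_state_if_linf_state ex_regular_singular_linf_state_if_bop_state
  by meson
end
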